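(* In the setting below, assume in addition: (i) for fixed $x$ and $z$ the functions $x'\mapsto d_{\mathrm p}(x,x')$ and $z'\mapsto d_{\mathrm d}(z,z')$ are closed (their sublevel sets are closed); (ii) if $\tilde x^{(k)}\in\operatorname{int}(\operatorname{dom}\phi_{\mathrm p})$ converges to $x\in\operatorname{dom}\phi_{\mathrm p}$ then $d_{\mathrm p}(x,\tilde x^{(k)})\to0$, and if $\tilde z^{(k)}\in\operatorname{int}(\operatorname{dom}\phi_{\mathrm d})$ converges to $z\in\operatorname{dom}\phi_{\mathrm d}$ then $d_{\mathrm d}(z,\tilde z^{(k)})\to0$; (iii) $\sigma,\tau>0$ satisfy $\sigma\tau\|A\|^2+\tau L<1$. Let $(x^{(k)},z^{(k)})$ be generated either by the Bregman primal Condat--V\~u algorithm \[x^{(k+1)}=\mathrm{prox}^{\phi_{\mathrm p}}_{\tau f}\big(x^{(k)},\tau A^Tz^{(k)}+\tau\nabla h(x^{(k)})\big),\quad z^{(k+1)}=\mathrm{prox}^{\phi_{\mathrm d}}_{\sigma g^*}\big(z^{(k)},-\sigma A(2x^{(k+1)}-x^{(k)})\big),\] or by the Bregman dual Condat--V\~u algorithm \[z^{(k+1)}=\mathrm{prox}^{\phi_{\mathrm d}}_{\sigma g^*}\big(z^{(k)},-\sigma Ax^{(k)}\big),\quad x^{(k+1)}=\mathrm{prox}^{\phi_{\mathrm p}}_{\tau f}\big(x^{(k)},\tau A^T(2z^{(k+1)}-z^{(k)})+\tau\nabla h(x^{(k)})\big),\] starting from $x^{(0)}\in\operatorname{int}(\operatorname{dom}\phi_{\mathrm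 p})\cap\operatorname{dom} h$, $z^{(0)}\in\operatorname{int}(\operatorname{dom}\phi_{\mathrm d})$. Then $x^{(k)}\to\hat x$ and $z^{(k)}\to\hat z$ for some $(\hat x,\hat z)$ satisfying the optimality conditions $-A^T\hat z\in\partial f(\hat x)+\nabla h(\hat x)$ and $A\hat x\in\partial g^*(\hat z)$.
   Context: Setting: $f:\mathbb R^n\to\mathbb R\cup\{+\infty\}$, $g:\mathbb R^m\to\mathbb R\cup\{+\infty\}$, $h$ are closed convex functions, $h$ differentiable on its open convex domain, $f+h$ and $g$ proper, $A\in\mathbb R^{m\times n}$; $g^*$ is the conjugate of $g$. A Bregman kernel $\phi$ is convex with $\operatorname{int}(\operatorname{dom}\phi)\neq\emptyset$, continuous on $\operatorname{dom}\phi$, continuously differentiable on $\operatorname{int}(\operatorname{dom}\phi)$; its distance is $d(x,y)=\phi(x)-\phi(y)-\langle\nabla\phi(y),x-y\rangle$ on $\operatorname{dom}\phi\times\operatorname{int}(\operatorname{dom}\phi)$, and $\mathrm{prox}^\phi_F(y,a)=\operatorname{argmin}_x\big(F(x)+\langle a,x\rangle+d(x,y)\big)$, assumed for every $a$ and $y\in\operatorname{int}(\operatorname{dom}\phi)$ to be a unique point of $\operatorname{int}(\operatorname{dom}\phi)$. Kernels $\phi_{\mathrm p}$ on $\mathbb R^n$, $\phi_{\mathrm d}$ on $\mathbb R^m$ have distances $d_{\mathrm p},d_{\mathrm d}$ with $d_{\mathrm p}(x,x')\ge\frac12\|x-x'\|_{\mathrm p}^2$, $d_{\mathrm d}(z,z')\ge\frac12\|z-z'\|_{\mathrm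 d}^2$ for norms $\|\cdot\|_{\mathrm p},\|\cdot\|_{\mathrm d}$. Also $\operatorname{dom}\phi_{\mathrm p}\subseteq\operatorname{dom}h$ and $h(x)-h(x')-\langle\nabla h(x'),x-x'\rangle\le L\,d_{\mathrm p}(x,x')$ for all $(x,x')\in\operatorname{dom}d_{\mathrm p}$, for some $L>0$. $\|A\|=\sup_{u\ne0,v\ne0}\langle v,Au\rangle/(\|v\|_{\mathrm d}\|u\|_{\mathrm p})$. The optimality conditions $0\in\partial f(x)+\nabla h(x)+A^Tz$, $0\in\partial g^*(z)-Ax$ have a solution $(x^\star,z^\star)\in\operatorname{dom}\phi_{\mathrm p}\times\operatorname{dom}\phi_{\mathrm d}$. *)

theory Defs
  imports "HOL-Analysis.Analysis" "HOL-Library.Extended_Real"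
begin

definition edom :: "('a \<Rightarrow> ereal) \<Rightarrow> 'a set" where
  "edom F = {x. F x < \<infinity>}"

definition eproper :: "('a \<Rightarrow> ereal) \<Rightarrow> bool" where
  "eproper F \<longleftrightarrow> (\<forall>x. F x \<noteq> -\<infinity>) \<and> edom F \<noteq> {}"

definition eepigraph :: "('a \<Rightarrow> ereal) \<Rightarrow> ('a \<times> real) set" where
  "eepigraph F = {(x, t). F x \<le> ereal t}"

definition econvex :: "('a::real_vector \<Rightarrow> ereal) \<Rightarrow> bool" where
  "econvex F \<longleftrightarrow> convex (eepigraph F)"

definition eclosed :: "('a::topological_space \<Rightarrow> ereal) \<Rightarrow> bool" where
  "eclosed F \<longleftrightarrow> closed (eepigraph F)"

definition subdiff :: "('a::real_inner \<Rightarrow> ereal) \<Rightarrow> 'a \<Rightarrow> 'a set" where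
  "subdiff F x = {u. \<bar>F x\<bar> \<noteq> \<infinity> \<and> (\<forall>y. F x + ereal (u \<bullet> (y - x)) \<le> F y)}"

definition conjugate :: "('a::real_inner \<Rightarrow> ereal) \<Rightarrow> 'a \<Rightarrow> ereal" where
  "conjugate g z = (SUP x. ereal (z \<bullet> x) - g x)"

definition is_norm :: "('a::real_vector \<Rightarrow> real) \<Rightarrow> bool" where
  "is_norm N \<longleftrightarrow> (\<forall>x. 0 \<le> N x) \<and> (\<forall>x. N x = 0 \<longleftrightarrow> x = 0)
     \<and> (\<forall>c x. N (c *\<^sub>R x) = \<bar>c\<bar> * N x) \<and> (\<forall>x y. N (x + y) \<le> N x + N y)"

definition opnorm :: "(real^'n \<Rightarrow> real) \<Rightarrow> (real^'m \<Rightarrow> real) \<Rightarrow> real^'n^'m \<Rightarrow> real" where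
  "opnorm Np Nd A = Sup {(v \<bullet> (A *v u)) / (Nd v * Np u) | u v. u \<noteq> 0 \<and> v \<noteq> 0}"

definition bkernel :: "('a::euclidean_space \<Rightarrow> ereal) \<Rightarrow> ('a \<Rightarrow> 'a) \<Rightarrow> bool" where
  "bkernel \<phi> G \<longleftrightarrow> econvex \<phi> \<and> (\<forall>x. \<phi> x \<noteq> -\<infinity>) \<and> interior (edom \<phi>) \<noteq> {}
     \<and> continuous_on (edom \<phi>) \<phi>
     \<and> (\<forall>x\<in>interior (edom \<phi>). ((\<lambda>y. real_of_ereal (\<phi> y)) has_derivative (\<lambda>d. G x \<bullet> d)) (at x))
     \<and> continuous_on (interior (edom \<phi>)) G"

text \<open>Bregman distance d(x,y), meaningful for x in dom \<phi>, y in int dom \<phi>.\<close>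
definition bdist :: "('a::real_inner \<Rightarrow> ereal) \<Rightarrow> ('a \<Rightarrow> 'a) \<Rightarrow> 'a \<Rightarrow> 'a \<Rightarrow> real" where
  "bdist \<phi> G x y = real_of_ereal (\<phi> x) - real_of_ereal (\<phi> y) - G y \<bullet> (x - y)"

definition bprox_obj :: "('a::real_inner \<Rightarrow> ereal) \<Rightarrow> ('a \<Rightarrow> 'a) \<Rightarrow> ('a \<Rightarrow> ereal) \<Rightarrow> 'a \<Rightarrow> 'a \<Rightarrow> 'a \<Rightarrow> ereal" where
  "bprox_obj \<phi> G F y a x = (if x \<in> edom \<phi> then F x + ereal (a \<bullet> x + bdist \<phi> G x y) else \<infinity>)"

definition is_bprox :: "('a::real_inner \<Rightarrow> ereal) \<Rightarrow> ('a \<Rightarrow> 'a) \<Rightarrow> ('a \<Rightarrow> ereal) \<Rightarrow> 'a \<Rightarrow> 'a \<Rightarrow> 'a \<Rightarrow> bool" where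
  "is_bprox \<phi> G F y a x \<longleftrightarrow> (\<forall>x'. bprox_obj \<phi> G F y a x \<le> bprox_obj \<phi> G F y a x')"

definition bprox :: "('a::real_inner \<Rightarrow> ereal) \<Rightarrow> ('a \<Rightarrow> 'a) \<Rightarrow> ('a \<Rightarrow> ereal) \<Rightarrow> 'a \<Rightarrow> 'a \<Rightarrow> 'a" where
  "bprox \<phi> G F y a = (THE x. is_bprox \<phi> G F y a x)"

definition bprox_welldef :: "('a::euclidean_space \<Rightarrow> ereal) \<Rightarrow> ('a \<Rightarrow> 'a) \<Rightarrow> ('a \<Rightarrow> ereal) \<Rightarrow> bool" where
  "bprox_welldef \<phi> G F \<longleftrightarrow> (\<forall>a. \<forall>y\<in>interior (edom \<phi>).
      (\<exists>!x. is_bprox \<phi> G F y a x) \<and> (\<forall>x. is_bprox \<phi> G F y a x \<longrightarrow> x \<in> interior (edom \<phi>)))"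

end

(*
  Fix a saddle point (xs, zs). For each proximal step the Bregman three-point inequality, combined
  with the optimality conditions at (xs, zs) and with the convexity and relative L-smoothness of h,
  shows that the Lyapunov function

    V k = d_p(xs, x k) / tau + d_d(zs, z k) / sigma -/+ <z k - zs, A (x k - xs)>

  decreases by at least (1 - theta) ((1/tau - L) d_p(x (k+1), x k) + d_d(z (k+1), z k) / sigma).
  The coupling terms are bounded through the operator norm of A and a weighted Young inequality;
  the step-size condition sigma tau |A|^2 + tau L < 1 is exactly what makes theta < 1. Hence V is
  nonnegative and nonincreasing, successive differences vanish and the iterates are bounded.
  The closedness of the Bregman sublevel sets keeps a cluster point in the interior of the kernel
  domains; passing to the limit in the prox inequalities (f and the conjugate of g have closed
  epigraphs) shows that it is again a saddle point, and the Lyapunov function built on this saddle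
  point tends to 0 along the whole sequence.
*)
theory Submission
  imports Defs
begin

section \<open>Extended-real convex functions\<close>

lemma edom_ereal_real:
  assumes "F x \<noteq> -\<infinity>" "x \<in> edom F"
  shows "ereal (real_of_ereal (F x)) = F x"
  using assms unfolding edom_def by (cases "F x") auto

lemma econvex_combination:
  assumes F: "econvex F" "\<forall>x. F x \<noteq> -\<infinity>" and ab: "a \<in> edom F" "b \<in> edom F"
    and t: "0 \<le> t" "t \<le> 1"
  shows "(1 - t) *\<^sub>R a + t *\<^sub>R b \<in> edom F"
    and "real_of_ereal (F ((1 - t) *\<^sub>R a + t *\<^sub>R b))
           \<le> (1 - t) * real_of_ereal (F a) + t * real_of_ereal (F b)"
proof -
  have "(a, real_of_ereal (F a)) \<in> eepigraph F" "(b, real_of_ereal (F b)) \<in> eepigraph F"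
    unfolding eepigraph_def using edom_ereal_real[of F, OF F(2)[rule_format]] ab by auto
  then have "(1 - t) *\<^sub>R (a, real_of_ereal (F a)) + t *\<^sub>R (b, real_of_ereal (F b)) \<in> eepigraph F"
    using F(1) t unfolding econvex_def by (intro convexD) auto
  then have le: "F ((1 - t) *\<^sub>R a + t *\<^sub>R b) \<le> ereal ((1 - t) * real_of_ereal (F a) + t * real_of_ereal (F b))"
    unfolding eepigraph_def by simp
  then show dom: "(1 - t) *\<^sub>R a + t *\<^sub>R b \<in> edom F"
    unfolding edom_def using le_less_trans by fastforce
  show "real_of_ereal (F ((1 - t) *\<^sub>R a + t *\<^sub>R b)) \<le> (1 - t) * real_of_ereal (F a) + t * real_of_ereal (F b)"
    using le edom_ereal_real[OF F(2)[rule_format] dom] by (metis ereal_less_eq(3))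
qed

lemma edom_cmult: "0 < c \<Longrightarrow> edom (\<lambda>x. ereal c * F x) = edom F"
  unfolding edom_def by (auto elim!: ereal_cases[of "F _"])

lemma econvex_cmult:
  assumes "econvex F" "0 < c"
  shows "econvex (\<lambda>x. ereal c * F x)"
proof -
  have "eepigraph (\<lambda>x. ereal c * F x) = (\<lambda>(y, t). (y, c * t)) ` eepigraph F"
  proof (intro set_eqI iffI)
    fix w assume "w \<in> eepigraph (\<lambda>x. ereal c * F x)"
    then obtain y t where w: "w = (y, t)" "ereal c * F y \<le> ereal t"
      unfolding eepigraph_def by auto
    then have "F y \<le> ereal (t / c)"
      using \<open>0 < c\<close> by (cases "F y") (auto simp: field_simps)
    then show "w \<in> (\<lambda>(y, t). (y, c * t)) ` eepigraph F"
      using w \<open>0 < c\<close> unfolding eepigraph_def by (auto intro!: image_eqI[of _ _ "(y, t / c)"])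
  next
    fix w assume "w \<in> (\<lambda>(y, t). (y, c * t)) ` eepigraph F"
    then obtain y t where "w = (y, c * t)" "F y \<le> ereal t"
      unfolding eepigraph_def by auto
    then show "w \<in> eepigraph (\<lambda>x. ereal c * F x)"
      using \<open>0 < c\<close> ereal_mult_left_mono[of "F y" "ereal t" "ereal c"]
      unfolding eepigraph_def by auto
  qed
  moreover have "linear (\<lambda>(y :: 'a, t). (y, c * t))"
    by (rule linearI) (auto simp: algebra_simps)
  ultimately show ?thesis
    using assms(1) unfolding econvex_def by (simp add: convex_linear_image)
qed

lemma eepigraph_conjugate:
  "eepigraph (conjugate g) = (\<Inter>y. {(z, t). ereal (z \<bullet> y) - g y \<le> ereal t})"
  unfolding eepigraph_def conjugate_def by (auto simp: SUP_le_iff)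

lemma conjugate_affine_minorant_cases:
  obtains "{(z, t). ereal (z \<bullet> y) - g y \<le> ereal t} = UNIV"
  | "{(z, t). ereal (z \<bullet> y) - g y \<le> ereal t} = {}"
  | "{(z, t). ereal (z \<bullet> y) - g y \<le> ereal t} = {w. (y, -1) \<bullet> w \<le> real_of_ereal (g y)}"
proof (cases "g y")
  case (real r)
  then have "{(z, t). ereal (z \<bullet> y) - g y \<le> ereal t} = {w. (y, -1) \<bullet> w \<le> real_of_ereal (g y)}"
    by (auto simp: inner_Pair inner_commute split: prod.splits)
  then show ?thesis by (rule that(3))
qed (auto intro: that)

lemma econvex_conjugate: "econvex (conjugate g)"
  unfolding econvex_def eepigraph_conjugate
proof (intro convex_INT ballI)
  fix y
  show "convex {(z, t). ereal (z \<bullet> y) - g y \<le> ereal t}"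
    by (rule conjugate_affine_minorant_cases[of y g]) (simp_all add: convex_halfspace_le)
qed

lemma eclosed_conjugate: "eclosed (conjugate g)"
  unfolding eclosed_def eepigraph_conjugate
proof (intro closed_INT ballI)
  fix y
  show "closed {(z, t). ereal (z \<bullet> y) - g y \<le> ereal t}"
    by (rule conjugate_affine_minorant_cases[of y g]) (simp_all add: closed_halfspace_le)
qed

lemma eclosed_limit_le:
  assumes "eclosed F" "X \<longlonglongrightarrow> x" "\<And>k. F (X k) \<le> ereal (c k)" "c \<longlonglongrightarrow> l"
  shows "F x \<le> ereal l"
proof -
  have "closed (eepigraph F)" using assms(1) unfolding eclosed_def .
  moreover have "(X k, c k) \<in> eepigraph F" for k using assms(3) unfolding eepigraph_def by simp
  moreover have "(\<lambda>k. (X k, c k)) \<longlonglongrightarrow> (x, l)" using assms(2,4) by (rule tendsto_Pair)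
  ultimately have "(x, l) \<in> eepigraph F" by (rule closed_sequentially)
  then show ?thesis unfolding eepigraph_def by simp
qed

lemma subdiff_edom: "u \<in> subdiff F x \<Longrightarrow> x \<in> edom F"
  unfolding subdiff_def edom_def by (auto simp: less_top)

lemma subdiff_not_MInfty:
  assumes "u \<in> subdiff F x" shows "F y \<noteq> -\<infinity>"
proof -
  have "\<bar>F x\<bar> \<noteq> \<infinity>" "F x + ereal (u \<bullet> (y - x)) \<le> F y"
    using assms unfolding subdiff_def by auto
  then show ?thesis by (cases "F x"; cases "F y") auto
qed

lemma subdiff_real_le:
  assumes "u \<in> subdiff F x" "y \<in> edom F"
  shows "real_of_ereal (F x) + u \<bullet> (y - x) \<le> real_of_ereal (F y)"
proof -
  have "F x + ereal (u \<bullet> (y - x)) \<le> F y" using assms(1) unfolding subdiff_def by blast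
  moreover obtain rx ry where "F x = ereal rx" "F y = ereal ry"
    using edom_ereal_real[of F, OF subdiff_not_MInfty[OF assms(1)]] subdiff_edom[OF assms(1)] assms(2)
    by metis
  ultimately show ?thesis by simp
qed

lemma subdiff_realI:
  assumes "\<forall>y. F y \<noteq> -\<infinity>" "x \<in> edom F"
    and "\<And>y. y \<in> edom F \<Longrightarrow> real_of_ereal (F x) + u \<bullet> (y - x) \<le> real_of_ereal (F y)"
  shows "u \<in> subdiff F x"
  unfolding subdiff_def
proof (intro CollectI conjI allI)
  obtain rx where rx: "F x = ereal rx"
    using edom_ereal_real assms(1,2) by metis
  then show "\<bar>F x\<bar> \<noteq> \<infinity>" by simp
  fix y
  show "F x + ereal (u \<bullet> (y - x)) \<le> F y"
  proof (cases "y \<in> edom F")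
    case True
    then obtain ry where "F y = ereal ry"
      using edom_ereal_real assms(1) by metis
    then show ?thesis using assms(3)[OF True] rx by simp
  next
    case False
    then show ?thesis unfolding edom_def by (simp add: top.not_eq_extremum)
  qed
qed

lemma has_derivative_directional_ge:
  fixes R :: "'a::real_inner \<Rightarrow> real"
  assumes R: "(R has_derivative (\<lambda>d. g \<bullet> d)) (at x)"
    and le: "\<forall>\<^sub>F t in at_right 0. c * t \<le> R (x + t *\<^sub>R v) - R x"
  shows "c \<le> g \<bullet> v"
proof -
  have line: "((\<lambda>t. x + t *\<^sub>R v) has_derivative (\<lambda>t. t *\<^sub>R v)) (at 0)"
    by (auto intro!: derivative_eq_intros)
  have "(R has_derivative (\<lambda>d. g \<bullet> d)) (at ((\<lambda>t. x + t *\<^sub>R v) 0))"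
    using R by simp
  from has_derivative_compose[OF line this]
  have "((\<lambda>t. R (x + t *\<^sub>R v)) has_derivative (\<lambda>t. t * (g \<bullet> v))) (at 0)"
    by simp
  then have "((\<lambda>t. R (x + t *\<^sub>R v)) has_field_derivative g \<bullet> v) (at 0)"
    by (rule has_derivative_imp_has_field_derivative) auto
  then have "((\<lambda>t. (R (x + t *\<^sub>R v) - R x) / t) \<longlongrightarrow> g \<bullet> v) (at 0)"
    unfolding DERIV_def by simp
  then have "((\<lambda>t. (R (x + t *\<^sub>R v) - R x) / t) \<longlongrightarrow> g \<bullet> v) (at_right 0)"
    by (simp add: filterlim_at_split)
  moreover have "\<forall>\<^sub>F t in at_right 0. c \<le> (R (x + t *\<^sub>R v) - R x) / t"
    using le eventually_at_right_less[of 0]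
    by eventually_elim (simp add: pos_le_divide_eq)
  ultimately show ?thesis
    by (intro tendsto_lowerbound) auto
qed

lemma econvex_gradient_ineq:
  assumes F: "econvex F" "\<forall>x. F x \<noteq> -\<infinity>" and ab: "a \<in> edom F" "b \<in> edom F"
    and D: "((\<lambda>y. real_of_ereal (F y)) has_derivative (\<lambda>d. g \<bullet> d)) (at a)"
  shows "real_of_ereal (F a) + g \<bullet> (b - a) \<le> real_of_ereal (F b)"
proof -
  define R where "R y = real_of_ereal (F y)" for y
  have "((\<lambda>y. - R y) has_derivative (\<lambda>d. (- g) \<bullet> d)) (at a)"
    using has_derivative_minus[OF D] unfolding R_def by simp
  moreover have "\<forall>\<^sub>F t in at_right 0. (R a - R b) * t \<le> - R (a + t *\<^sub>R (b - a)) - - R a"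
  proof (rule eventually_at_rightI[of 0 1])
    fix t :: real assume "t \<in> {0<..<1}"
    then have "R ((1 - t) *\<^sub>R a + t *\<^sub>R b) \<le> (1 - t) * R a + t * R b"
      unfolding R_def by (intro econvex_combination(2)[OF F ab]) auto
    moreover have "a + t *\<^sub>R (b - a) = (1 - t) *\<^sub>R a + t *\<^sub>R b" by (simp add: algebra_simps)
    ultimately show "(R a - R b) * t \<le> - R (a + t *\<^sub>R (b - a)) - - R a" by (simp add: algebra_simps)
  qed simp
  ultimately have "R a - R b \<le> (- g) \<bullet> (b - a)" by (rule has_derivative_directional_ge)
  then show ?thesis unfolding R_def by simp
qed

lemma local_min_imp_subdiff:
  assumes F: "econvex F" "\<forall>y. F y \<noteq> -\<infinity>" "x \<in> edom F"
    and H: "(H has_derivative (\<lambda>d. gH \<bullet> d)) (at x)"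
    and U: "open U" "x \<in> U"
    and min: "\<And>u. u \<in> U \<Longrightarrow> u \<in> edom F \<Longrightarrow>
                real_of_ereal (F x) + H x \<le> real_of_ereal (F u) + H u + w \<bullet> (u - x)"
  shows "- w - gH \<in> subdiff F x"
proof (rule subdiff_realI[OF F(2,3)])
  fix y assume y: "y \<in> edom F"
  define Fr where "Fr v = real_of_ereal (F v)" for v
  have "((\<lambda>t. x + t *\<^sub>R (y - x)) \<longlongrightarrow> x + 0 *\<^sub>R (y - x)) (at_right 0)"
    by (intro tendsto_intros)
  then have "\<forall>\<^sub>F t in at_right 0. x + t *\<^sub>R (y - x) \<in> U"
    using U by (simp add: topological_tendstoD)
  moreover have "\<forall>\<^sub>F t in at_right 0. t \<in> {0<..<1 :: real}"
    by (rule eventually_at_rightI[of 0 1]) auto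
  ultimately have "\<forall>\<^sub>F t in at_right 0.
      (Fr x - Fr y - w \<bullet> (y - x)) * t \<le> H (x + t *\<^sub>R (y - x)) - H x"
  proof eventually_elim
    case (elim t)
    define xt where "xt = x + t *\<^sub>R (y - x)"
    have xt: "xt = (1 - t) *\<^sub>R x + t *\<^sub>R y" unfolding xt_def by (simp add: algebra_simps)
    have "xt \<in> edom F" "Fr xt \<le> (1 - t) * Fr x + t * Fr y"
      unfolding xt Fr_def using econvex_combination[OF F(1,2,3) y] elim(2) by auto
    moreover have "Fr x + H x \<le> Fr xt + H xt + w \<bullet> (xt - x)"
      unfolding Fr_def using min elim(1) \<open>xt \<in> edom F\<close> unfolding xt_def by blast
    moreover have "w \<bullet> (xt - x) = t * (w \<bullet> (y - x))" unfolding xt_def by simp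
    ultimately show ?case unfolding xt_def[symmetric] by (simp add: algebra_simps)
  qed
  then have "Fr x - Fr y - w \<bullet> (y - x) \<le> gH \<bullet> (y - x)"
    by (rule has_derivative_directional_ge[OF H])
  then show "real_of_ereal (F x) + (- w - gH) \<bullet> (y - x) \<le> real_of_ereal (F y)"
    unfolding Fr_def by (simp add: inner_diff_left)
qed

section \<open>Bregman proximal steps\<close>

lemma bdist_three_point:
  "bdist \<phi> G u y - bdist \<phi> G u x - bdist \<phi> G x y = (G x - G y) \<bullet> (u - x)"
  unfolding bdist_def by (simp add: algebra_simps inner_diff_right inner_diff_left)

lemma is_bprox_edom:
  assumes "\<forall>x. F x \<noteq> -\<infinity>" "is_bprox \<phi> G F y a xp" "xp \<in> edom \<phi>"
    and "u \<in> edom \<phi>" "u \<in> edom F"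
  shows "xp \<in> edom F"
proof -
  obtain r where "F u = ereal r" using edom_ereal_real[of F u] assms(1,5) by metis
  then have "bprox_obj \<phi> G F y a u < \<infinity>" using assms(4) unfolding bprox_obj_def by simp
  moreover have "bprox_obj \<phi> G F y a xp \<le> bprox_obj \<phi> G F y a u"
    using assms(2) unfolding is_bprox_def by blast
  ultimately show ?thesis using assms(3) unfolding bprox_obj_def edom_def by (auto simp: less_top)
qed

lemma is_bprox_real_le:
  assumes "\<forall>x. F x \<noteq> -\<infinity>" "is_bprox \<phi> G F y a xp" "xp \<in> edom \<phi>" "xp \<in> edom F"
    and "v \<in> edom \<phi>" "v \<in> edom F"
  shows "real_of_ereal (F xp) + a \<bullet> xp + bdist \<phi> G xp y \<le> real_of_ereal (F v) + a \<bullet> v + bdist \<phi> G v y"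
proof -
  obtain r1 r2 where "F xp = ereal r1" "F v = ereal r2"
    using edom_ereal_real[of F] assms(1,4,6) by metis
  moreover have "bprox_obj \<phi> G F y a xp \<le> bprox_obj \<phi> G F y a v"
    using assms(2) unfolding is_bprox_def by blast
  ultimately show ?thesis using assms(3,5) unfolding bprox_obj_def by simp
qed

text \<open>First-order optimality of the proximal point \<open>xp\<close>, tested along the segment towards \<open>u\<close>.\<close>
lemma is_bprox_three_point:
  fixes \<phi> :: "'a::euclidean_space \<Rightarrow> ereal"
  assumes \<phi>: "bkernel \<phi> G" and F: "econvex F" "\<forall>x. F x \<noteq> -\<infinity>"
    and xp: "is_bprox \<phi> G F y a xp" "xp \<in> interior (edom \<phi>)"
    and u: "u \<in> edom \<phi>" "u \<in> edom F"
  shows "xp \<in> edom F"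
    and "real_of_ereal (F xp) - real_of_ereal (F u) + a \<bullet> (xp - u)
           \<le> bdist \<phi> G u y - bdist \<phi> G u xp - bdist \<phi> G xp y"
proof -
  define R where "R v = real_of_ereal (\<phi> v)" for v
  define Fr where "Fr v = real_of_ereal (F v)" for v
  have \<phi>_convex: "econvex \<phi>" "\<forall>x. \<phi> x \<noteq> -\<infinity>" using \<phi> unfolding bkernel_def by auto
  have xp_dom: "xp \<in> edom \<phi>" using xp(2) interior_subset by blast
  show xpF: "xp \<in> edom F" by (rule is_bprox_edom[OF F(2) xp(1) xp_dom u])
  have "\<forall>\<^sub>F t in at_right 0.
      (Fr xp - Fr u - a \<bullet> (u - xp) + G y \<bullet> (u - xp)) * t \<le> R (xp + t *\<^sub>R (u - xp)) - R xp"
  proof (rule eventually_at_rightI[of 0 1])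
    fix t :: real assume t: "t \<in> {0<..<1}"
    define xt where "xt = xp + t *\<^sub>R (u - xp)"
    have xt: "xt = (1 - t) *\<^sub>R xp + t *\<^sub>R u" unfolding xt_def by (simp add: algebra_simps)
    have xt_dom: "xt \<in> edom \<phi>"
      unfolding xt using econvex_combination(1)[OF \<phi>_convex xp_dom u(1)] t by simp
    have xtF: "xt \<in> edom F" "Fr xt \<le> (1 - t) * Fr xp + t * Fr u"
      unfolding xt Fr_def using econvex_combination[OF F xpF u(2)] t by auto
    have "Fr xp + a \<bullet> xp + bdist \<phi> G xp y \<le> Fr xt + a \<bullet> xt + bdist \<phi> G xt y"
      unfolding Fr_def by (rule is_bprox_real_le[OF F(2) xp(1) xp_dom xpF xt_dom xtF(1)])
    moreover have "bdist \<phi> G xt y - bdist \<phi> G xp y = R xt - R xp - t * (G y \<bullet> (u - xp))"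
      unfolding bdist_def R_def xt_def by (simp add: algebra_simps inner_diff_right inner_diff_left)
    moreover have "a \<bullet> xt - a \<bullet> xp = t * (a \<bullet> (u - xp))" unfolding xt_def by (simp add: inner_add_right)
    ultimately show "(Fr xp - Fr u - a \<bullet> (u - xp) + G y \<bullet> (u - xp)) * t \<le> R xt - R xp"
      using xtF(2) by (simp add: algebra_simps)
  qed simp
  moreover have "(R has_derivative (\<lambda>d. G xp \<bullet> d)) (at xp)"
    using \<phi> xp(2) unfolding bkernel_def R_def by blast
  ultimately have "Fr xp - Fr u - a \<bullet> (u - xp) + G y \<bullet> (u - xp) \<le> G xp \<bullet> (u - xp)"
    using has_derivative_directional_ge by blast
  then show "real_of_ereal (F xp) - real_of_ereal (F u) + a \<bullet> (xp - u)
           \<le> bdist \<phi> G u y - bdist \<phi> G u xp - bdist \<phi> G xp y"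
    unfolding bdist_three_point Fr_def by (simp add: inner_diff_left inner_diff_right algebra_simps)
qed

lemma is_bprox_cmult_three_point:
  fixes \<phi> :: "'a::euclidean_space \<Rightarrow> ereal"
  assumes "bkernel \<phi> G" "econvex F" "\<forall>x. F x \<noteq> -\<infinity>" "0 < c"
    and "is_bprox \<phi> G (\<lambda>x. ereal c * F x) y a xp" "xp \<in> interior (edom \<phi>)"
    and "u \<in> edom \<phi>" "u \<in> edom F"
  shows "xp \<in> edom F"
    and "c * (real_of_ereal (F xp) - real_of_ereal (F u)) + a \<bullet> (xp - u)
           \<le> bdist \<phi> G u y - bdist \<phi> G u xp - bdist \<phi> G xp y"
proof -
  have cvx: "econvex (\<lambda>x. ereal c * F x)" by (rule econvex_cmult[OF assms(2,4)])
  have nm: "\<forall>x. ereal c * F x \<noteq> -\<infinity>"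
  proof
    fix x show "ereal c * F x \<noteq> -\<infinity>" using assms(3,4) by (cases "F x") auto
  qed
  have "u \<in> edom (\<lambda>x. ereal c * F x)" using edom_cmult[OF assms(4), of F] assms(8) by simp
  note ineq = is_bprox_three_point[OF assms(1) cvx nm assms(5,6,7) this]
  from ineq(1) show "xp \<in> edom F" using edom_cmult[OF assms(4), of F] by simp
  show "c * (real_of_ereal (F xp) - real_of_ereal (F u)) + a \<bullet> (xp - u)
           \<le> bdist \<phi> G u y - bdist \<phi> G u xp - bdist \<phi> G xp y"
    using ineq(2) by (simp add: real_of_ereal_mult right_diff_distrib)
qed

lemma bprox_welldefD:
  assumes "bprox_welldef \<phi> G F" "y \<in> interior (edom \<phi>)"
  shows "is_bprox \<phi> G F y a (bprox \<phi> G F y a)" "bprox \<phi> G F y a \<in> interior (edom \<phi>)"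
proof -
  have "\<exists>!x. is_bprox \<phi> G F y a x" "\<And>x. is_bprox \<phi> G F y a x \<Longrightarrow> x \<in> interior (edom \<phi>)"
    using assms unfolding bprox_welldef_def by blast+
  moreover from this(1) have "is_bprox \<phi> G F y a (bprox \<phi> G F y a)"
    unfolding bprox_def by (rule theI')
  ultimately show "is_bprox \<phi> G F y a (bprox \<phi> G F y a)" "bprox \<phi> G F y a \<in> interior (edom \<phi>)"
    by blast+
qed

lemma bdist_tendsto:
  assumes "bkernel \<phi> G" "y \<in> interior (edom \<phi>)" "Y \<longlonglongrightarrow> y"
  shows "(\<lambda>k. bdist \<phi> G u (Y k)) \<longlonglongrightarrow> bdist \<phi> G u y"
proof -
  have "((\<lambda>v. real_of_ereal (\<phi> v)) has_derivative (\<lambda>d. G y \<bullet> d)) (at y)"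
    using assms(1,2) unfolding bkernel_def by blast
  then have "isCont (\<lambda>v. real_of_ereal (\<phi> v)) y" by (rule has_derivative_continuous)
  moreover have "isCont G y"
    using assms(1,2) unfolding bkernel_def by (simp add: continuous_on_eq_continuous_at)
  ultimately show ?thesis
    unfolding bdist_def by (intro tendsto_intros isCont_tendsto_compose[OF _ assms(3)] assms(3))
qed

section \<open>Norms on finite-dimensional spaces\<close>

lemma is_norm_zero: "is_norm N \<Longrightarrow> N 0 = 0"
  unfolding is_norm_def by blast

lemma is_norm_pos: "is_norm N \<Longrightarrow> x \<noteq> 0 \<Longrightarrow> 0 < N x"
  unfolding is_norm_def by (metis order_less_le)

lemma is_norm_minus_commute:
  assumes "is_norm N" shows "N (x - y) = N (y - x)"
proof -
  have "N ((-1) *\<^sub>R (y - x)) = \<bar>-1\<bar> * N (y - x)" using assms unfolding is_norm_def by blast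
  then show ?thesis by simp
qed

lemma is_norm_sum: "is_norm N \<Longrightarrow> N (sum v S) \<le> (\<Sum>i\<in>S. N (v i))"
proof (induction S rule: infinite_finite_induct)
  case (insert a S)
  then have "N (v a + sum v S) \<le> N (v a) + N (sum v S)" unfolding is_norm_def by blast
  with insert show ?case by simp
qed (simp_all add: is_norm_zero)

lemma is_norm_le_norm:
  fixes N :: "'a::euclidean_space \<Rightarrow> real"
  assumes "is_norm N"
  shows "N x \<le> (\<Sum>b\<in>Basis. N b) * norm x"
proof -
  have "N x = N (\<Sum>b\<in>Basis. (x \<bullet> b) *\<^sub>R b)" by (simp add: euclidean_representation)
  also have "\<dots> \<le> (\<Sum>b\<in>Basis. N ((x \<bullet> b) *\<^sub>R b))" by (rule is_norm_sum[OF assms])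
  also have "\<dots> = (\<Sum>b\<in>Basis. \<bar>x \<bullet> b\<bar> * N b)" using assms unfolding is_norm_def by simp
  also have "\<dots> \<le> (\<Sum>b\<in>Basis. norm x * N b)"
    using assms unfolding is_norm_def by (intro sum_mono mult_right_mono Basis_le_norm) auto
  finally show ?thesis by (simp add: sum_distrib_left mult.commute)
qed

text \<open>A norm is Lipschitz, hence attains a positive minimum on the compact unit sphere.\<close>
lemma is_norm_ge_norm:
  fixes N :: "'a::euclidean_space \<Rightarrow> real"
  assumes "is_norm N"
  obtains c where "c > 0" "\<And>x. c * norm x \<le> N x"
proof -
  define C where "C = (\<Sum>b\<in>Basis. N b)"
  have "dist (N x) (N y) \<le> C * dist x y" for x y
  proof -
    have "N ((x - y) + y) \<le> N (x - y) + N y" "N ((y - x) + x) \<le> N (y - x) + N x"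
      using assms unfolding is_norm_def by blast+
    then have "N x \<le> N (x - y) + N y" "N y \<le> N (x - y) + N x"
      using is_norm_minus_commute[OF assms, of x y] by simp_all
    then show ?thesis
      using is_norm_le_norm[OF assms, of "x - y"] unfolding C_def dist_real_def dist_norm by linarith
  qed
  moreover have "C \<ge> 0" using assms unfolding C_def is_norm_def by (simp add: sum_nonneg)
  ultimately have "continuous_on (sphere 0 1) N"
    by (intro lipschitz_on_continuous_on lipschitz_onI)
  moreover have "sphere (0::'a) 1 \<noteq> {}"
    using norm_Basis[OF SOME_Basis] by (metis dist_0_norm mem_sphere empty_iff)
  ultimately obtain x0 where x0: "x0 \<in> sphere 0 1" "\<And>y. y \<in> sphere 0 1 \<Longrightarrow> N x0 \<le> N y"
    using continuous_attains_inf[OF compact_sphere] by blast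
  have "x0 \<noteq> 0" using x0(1) by auto
  then have "N x0 > 0" by (rule is_norm_pos[OF assms])
  moreover have "N x0 * norm x \<le> N x" for x
  proof (cases "x = 0")
    case False
    then have "N x0 \<le> N (x /\<^sub>R norm x)" by (intro x0(2)) simp
    also have "\<dots> = N x / norm x" using assms unfolding is_norm_def by (simp add: divide_inverse mult.commute)
    finally show ?thesis using False by (simp add: field_simps)
  qed (use assms in \<open>simp add: is_norm_def\<close>)
  ultimately show ?thesis by (rule that)
qed

lemma is_norm_sq_tendsto_zero:
  fixes v :: "nat \<Rightarrow> 'a::euclidean_space"
  assumes "is_norm N" "\<And>k. (N (v k))\<^sup>2 \<le> e k" "e \<longlonglongrightarrow> 0"
  shows "v \<longlonglongrightarrow> 0"
proof -
  obtain c where c: "c > 0" "\<And>x. c * norm x \<le> N x" using is_norm_ge_norm[OF assms(1)] by blast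
  have "(c * norm (v k))\<^sup>2 \<le> e k" for k
  proof -
    have "(c * norm (v k))\<^sup>2 \<le> (N (v k))\<^sup>2" using c by (intro power_mono) auto
    then show ?thesis using assms(2)[of k] by linarith
  qed
  then have "(\<lambda>k. (c * norm (v k))\<^sup>2) \<longlonglongrightarrow> 0"
    by (intro tendsto_sandwich[OF _ _ tendsto_const assms(3)]) simp_all
  then have "(\<lambda>k. c * norm (v k)) \<longlonglongrightarrow> 0" by (simp add: power_tendsto_0_iff)
  then have "(\<lambda>k. norm (v k)) \<longlonglongrightarrow> 0"
    using tendsto_mult_left[of _ 0 sequentially "1 / c"] c(1) by simp
  then show ?thesis by (simp add: tendsto_norm_zero_iff)
qed

lemma is_norm_sq_bounded_range:
  fixes v :: "nat \<Rightarrow> 'a::euclidean_space"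
  assumes "is_norm N" "\<And>k. (N (a - v k))\<^sup>2 \<le> B"
  shows "bounded (range v)"
proof -
  obtain c where c: "c > 0" "\<And>x. c * norm x \<le> N x" using is_norm_ge_norm[OF assms(1)] by blast
  have "norm (v k) \<le> norm a + sqrt B / c" for k
  proof -
    have "N (a - v k) \<le> sqrt B" using assms(2) by (rule real_le_rsqrt)
    then have "c * norm (a - v k) \<le> sqrt B" using c(2)[of "a - v k"] by linarith
    then have "norm (a - v k) \<le> sqrt B / c" using c(1) by (simp add: field_simps)
    then show ?thesis using norm_triangle_ineq4[of a "a - v k"] by simp
  qed
  then show ?thesis unfolding bounded_iff by blast
qed

lemma opnorm_quotients_bdd_above:
  fixes A :: "real^'n^'m" and Np :: "real^'n \<Rightarrow> real" and Nd :: "real^'m \<Rightarrow> real"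
  assumes Np: "is_norm Np" and Nd: "is_norm Nd"
  shows "bdd_above {(v \<bullet> (A *v u)) / (Nd v * Np u) | u v. u \<noteq> 0 \<and> v \<noteq> 0}"
proof -
  obtain cp where cp: "cp > 0" "\<And>x. cp * norm x \<le> Np x" using is_norm_ge_norm[OF Np] by blast
  obtain cd where cd: "cd > 0" "\<And>x. cd * norm x \<le> Nd x" using is_norm_ge_norm[OF Nd] by blast
  obtain K where K: "K > 0" "\<And>x. norm (A *v x) \<le> norm x * K"
    using bounded_linear.pos_bounded[OF matrix_vector_mul_bounded_linear[of A]] by blast
  show ?thesis
  proof (rule bdd_aboveI)
    fix r assume "r \<in> {(v \<bullet> (A *v u)) / (Nd v * Np u) | u v. u \<noteq> 0 \<and> v \<noteq> 0}"
    then obtain u v where r: "r = (v \<bullet> (A *v u)) / (Nd v * Np u)" "u \<noteq> 0" "v \<noteq> 0"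
      by blast
    then have "Np u > 0" "Nd v > 0" using is_norm_pos[OF Np] is_norm_pos[OF Nd] by auto
    have "norm v \<le> Nd v / cd" "norm u \<le> Np u / cp"
      using cp cd by (simp_all add: pos_le_divide_eq mult.commute)
    have "v \<bullet> (A *v u) \<le> norm v * norm (A *v u)" by (rule norm_cauchy_schwarz)
    also have "\<dots> \<le> norm v * (norm u * K)" using K(2)[of u] by (rule mult_left_mono) simp
    also have "\<dots> \<le> (Nd v / cd) * ((Np u / cp) * K)"
      using \<open>norm v \<le> Nd v / cd\<close> \<open>norm u \<le> Np u / cp\<close> K(1) \<open>Nd v > 0\<close> cd(1)
      by (intro mult_mono mult_right_mono) auto
    also have "\<dots> = K / (cd * cp) * (Nd v * Np u)" by simp
    finally show "r \<le> K / (cd * cp)"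
      using \<open>Np u > 0\<close> \<open>Nd v > 0\<close> unfolding r(1) by (simp add: pos_divide_le_eq)
  qed
qed

lemma opnorm_bound:
  fixes A :: "real^'n^'m" and Np :: "real^'n \<Rightarrow> real" and Nd :: "real^'m \<Rightarrow> real"
  assumes Np: "is_norm Np" and Nd: "is_norm Nd"
  shows "\<bar>v \<bullet> (A *v u)\<bar> \<le> opnorm Np Nd A * Nd v * Np u"
proof (cases "u = 0 \<or> v = 0")
  case True
  then show ?thesis using is_norm_zero[OF Np] is_norm_zero[OF Nd] by auto
next
  case False
  define S where "S = {(v \<bullet> (A *v u)) / (Nd v * Np u) | u v. u \<noteq> 0 \<and> v \<noteq> 0}"
  have "(v \<bullet> (A *v u)) / (Nd v * Np u) \<in> S"
    unfolding S_def using False by blast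
  moreover have "((-v) \<bullet> (A *v u)) / (Nd (-v) * Np u) \<in> S"
    unfolding S_def using False by (intro CollectI exI[of _ u] exI[of _ "-v"]) simp
  ultimately have "(v \<bullet> (A *v u)) / (Nd v * Np u) \<le> opnorm Np Nd A"
    "((-v) \<bullet> (A *v u)) / (Nd (-v) * Np u) \<le> opnorm Np Nd A"
    using opnorm_quotients_bdd_above[OF Np Nd, of A]
    unfolding opnorm_def S_def[symmetric] by (simp_all add: cSup_upper)
  moreover have "Nd (-v) = Nd v" using is_norm_minus_commute[OF Nd, of 0 v] by simp
  ultimately have "(v \<bullet> (A *v u)) / (Nd v * Np u) \<le> opnorm Np Nd A"
    "- opnorm Np Nd A \<le> (v \<bullet> (A *v u)) / (Nd v * Np u)"
    by simp_all
  moreover have "Np u > 0" "Nd v > 0" using False is_norm_pos[OF Np] is_norm_pos[OF Nd] by auto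
  ultimately show ?thesis by (simp add: abs_le_iff pos_divide_le_eq pos_le_divide_eq mult.assoc)
qed

text \<open>The defect times \<open>\<alpha>\<close> is \<open>(\<alpha> a - M b)\<^sup>2 + (\<alpha> \<beta> - M\<^sup>2) b\<^sup>2\<close>.\<close>
lemma mult_le_weighted_squares:
  fixes M a b \<alpha> \<beta> :: real
  assumes "0 < \<alpha>" "M\<^sup>2 \<le> \<alpha> * \<beta>"
  shows "M * a * b \<le> (\<alpha> * a\<^sup>2 + \<beta> * b\<^sup>2) / 2"
proof -
  have "0 \<le> (\<alpha> * a - M * b)\<^sup>2 + (\<alpha> * \<beta> - M\<^sup>2) * b\<^sup>2" using assms(2) by simp
  also have "\<dots> = \<alpha> * (\<alpha> * a\<^sup>2 + \<beta> * b\<^sup>2 - 2 * (M * a * b))" by (simp add: power2_eq_square algebra_simps)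
  finally show ?thesis using assms(1) by (simp add: zero_le_mult_iff)
qed

section \<open>The Bregman Condat-Vu iteration\<close>

lemma inner_transpose_mult:
  fixes A :: "real^'n^'m"
  shows "(transpose A *v v) \<bullet> u = v \<bullet> (A *v u)"
  by (simp only: transpose_matrix_vector dot_lmul_matrix)

text \<open>Both variants of the algorithm are covered: \<open>p k\<close> and \<open>q k\<close> are the dual and primal
  points entering the primal and the dual proximal step. The primal-dual variant extrapolates
  \<open>q\<close> (\<open>s = 1\<close>), the dual-primal variant extrapolates \<open>p\<close> (\<open>s = -1\<close>); \<open>s\<close> is the
  sign of the coupling term in the Lyapunov function.\<close>

locale bregman_condat_vu =
  fixes f h :: "real^'n \<Rightarrow> ereal" and gh :: "real^'n \<Rightarrow> real^'n"
    and g :: "real^'m \<Rightarrow> ereal" and A :: "real^'n^'m"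
    and \<phi>p :: "real^'n \<Rightarrow> ereal" and Gp :: "real^'n \<Rightarrow> real^'n"
    and \<phi>d :: "real^'m \<Rightarrow> ereal" and Gd :: "real^'m \<Rightarrow> real^'m"
    and Np :: "real^'n \<Rightarrow> real" and Nd :: "real^'m \<Rightarrow> real"
    and L \<sigma> \<tau> s :: real
    and x :: "nat \<Rightarrow> real^'n" and z :: "nat \<Rightarrow> real^'m"
    and p :: "nat \<Rightarrow> real^'m" and q :: "nat \<Rightarrow> real^'n"
  assumes f_cc: "eclosed f" "econvex f"
    and h_convex: "econvex h"
    and h_diff: "\<forall>y\<in>edom h. \<bar>h y\<bar> \<noteq> \<infinity> \<and>
                  ((\<lambda>w. real_of_ereal (h w)) has_derivative (\<lambda>d. gh y \<bullet> d)) (at y)"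
    and kp: "bkernel \<phi>p Gp" and kd: "bkernel \<phi>d Gd"
    and proxp: "bprox_welldef \<phi>p Gp (\<lambda>y. ereal \<tau> * f y)"
    and proxd: "bprox_welldef \<phi>d Gd (\<lambda>w. ereal \<sigma> * conjugate g w)"
    and Np_norm: "is_norm Np" and Nd_norm: "is_norm Nd"
    and dp_strong: "\<forall>y\<in>edom \<phi>p. \<forall>y'\<in>interior (edom \<phi>p). bdist \<phi>p Gp y y' \<ge> (Np (y - y'))\<^sup>2 / 2"
    and dd_strong: "\<forall>w\<in>edom \<phi>d. \<forall>w'\<in>interior (edom \<phi>d). bdist \<phi>d Gd w w' \<ge> (Nd (w - w'))\<^sup>2 / 2"
    and dom_sub: "edom \<phi>p \<subseteq> edom h"
    and L_pos: "L > 0"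
    and h_smooth: "\<forall>y\<in>edom \<phi>p. \<forall>y'\<in>interior (edom \<phi>p).
         real_of_ereal (h y) - real_of_ereal (h y') - gh y' \<bullet> (y - y') \<le> L * bdist \<phi>p Gp y y'"
    and sol_exists: "\<exists>xs zs. xs \<in> edom \<phi>p \<and> zs \<in> edom \<phi>d
         \<and> - (transpose A *v zs) - gh xs \<in> subdiff f xs \<and> A *v xs \<in> subdiff (conjugate g) zs"
    and closed_dp: "\<forall>y\<in>edom \<phi>p. \<forall>c. closed {y'\<in>interior (edom \<phi>p). bdist \<phi>p Gp y y' \<le> c}"
    and closed_dd: "\<forall>w\<in>edom \<phi>d. \<forall>c. closed {w'\<in>interior (edom \<phi>d). bdist \<phi>d Gd w w' \<le> c}"
    and step_sizes: "\<sigma> > 0" "\<tau> > 0" "\<sigma> * \<tau> * (opnorm Np Nd A)\<^sup>2 + \<tau> * L < 1"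
    and x0: "x 0 \<in> interior (edom \<phi>p)"
    and z0: "z 0 \<in> interior (edom \<phi>d)"
    and x_iter: "\<And>k. x (Suc k) = bprox \<phi>p Gp (\<lambda>y. ereal \<tau> * f y) (x k)
                          (\<tau> *\<^sub>R (transpose A *v p k) + \<tau> *\<^sub>R gh (x k))"
    and z_iter: "\<And>k. z (Suc k) = bprox \<phi>d Gd (\<lambda>w. ereal \<sigma> * conjugate g w) (z k)
                          (- \<sigma> *\<^sub>R (A *v q k))"
    and variant: "(s = 1 \<and> (\<forall>k. p k = z k \<and> q k = 2 *\<^sub>R x (Suc k) - x k))
                \<or> (s = -1 \<and> (\<forall>k. p k = 2 *\<^sub>R z (Suc k) - z k \<and> q k = x k))"
begin

abbreviation "Dp \<equiv> bdist \<phi>p Gp"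
abbreviation "Dd \<equiv> bdist \<phi>d Gd"
abbreviation "M \<equiv> opnorm Np Nd A"
abbreviation "fr y \<equiv> real_of_ereal (f y)"
abbreviation "hr y \<equiv> real_of_ereal (h y)"
abbreviation "cr w \<equiv> real_of_ereal (conjugate g w)"

definition kkt_point :: "real^'n \<Rightarrow> real^'m \<Rightarrow> bool" where
  "kkt_point xs zs \<longleftrightarrow> xs \<in> edom \<phi>p \<and> zs \<in> edom \<phi>d
     \<and> - (transpose A *v zs) - gh xs \<in> subdiff f xs \<and> A *v xs \<in> subdiff (conjugate g) zs"

lemma kkt_point_exists: "\<exists>xs zs. kkt_point xs zs"
  using sol_exists unfolding kkt_point_def by blast

lemma kkt_point_edom:
  assumes "kkt_point xs zs"
  shows "xs \<in> edom \<phi>p" "zs \<in> edom \<phi>d" "xs \<in> edom f" "zs \<in> edom (conjugate g)"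
  using assms subdiff_edom unfolding kkt_point_def by blast+

lemma f_not_MInfty: "\<forall>y. f y \<noteq> -\<infinity>"
  using kkt_point_exists subdiff_not_MInfty unfolding kkt_point_def by blast

lemma conjugate_not_MInfty: "\<forall>w. conjugate g w \<noteq> -\<infinity>"
  using kkt_point_exists subdiff_not_MInfty unfolding kkt_point_def by blast

lemma h_not_MInfty: "\<forall>y. h y \<noteq> -\<infinity>"
proof
  fix y show "h y \<noteq> -\<infinity>"
    using h_diff by (cases "y \<in> edom h") (auto simp: edom_def)
qed

lemma h_gradient_ineq: "a \<in> edom h \<Longrightarrow> b \<in> edom h \<Longrightarrow> hr a + gh a \<bullet> (b - a) \<le> hr b"
  using econvex_gradient_ineq[OF h_convex h_not_MInfty] h_diff by blast

lemma kkt_primal_le: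
  assumes "kkt_point xs zs" "u \<in> edom f" "u \<in> edom h"
  shows "fr xs + hr xs \<le> fr u + hr u + zs \<bullet> (A *v (u - xs))"
proof -
  have "fr xs + (- (transpose A *v zs) - gh xs) \<bullet> (u - xs) \<le> fr u"
    using assms(1,2) subdiff_real_le unfolding kkt_point_def by blast
  moreover have "hr xs + gh xs \<bullet> (u - xs) \<le> hr u"
    using h_gradient_ineq dom_sub assms unfolding kkt_point_def by blast
  moreover have "(- (transpose A *v zs) - gh xs) \<bullet> (u - xs) = - (zs \<bullet> (A *v (u - xs))) - gh xs \<bullet> (u - xs)"
    by (simp only: inner_diff_left inner_minus_left inner_transpose_mult)
  ultimately show ?thesis by linarith
qed

lemma kkt_dual_le:
  assumes "kkt_point xs zs" "w \<in> edom (conjugate g)"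
  shows "cr zs \<le> cr w - (w - zs) \<bullet> (A *v xs)"
  using subdiff_real_le[of "A *v xs" "conjugate g" zs w] assms
  unfolding kkt_point_def by (simp add: inner_commute)

lemma Dp_nonneg:
  assumes "y \<in> edom \<phi>p" "y' \<in> interior (edom \<phi>p)" shows "0 \<le> Dp y y'"
proof -
  have "(Np (y - y'))\<^sup>2 / 2 \<le> Dp y y'" using dp_strong assms by blast
  moreover have "0 \<le> (Np (y - y'))\<^sup>2 / 2" by simp
  ultimately show ?thesis by linarith
qed

lemma Dd_nonneg:
  assumes "w \<in> edom \<phi>d" "w' \<in> interior (edom \<phi>d)" shows "0 \<le> Dd w w'"
proof -
  have "(Nd (w - w'))\<^sup>2 / 2 \<le> Dd w w'" using dd_strong assms by blast
  moreover have "0 \<le> (Nd (w - w'))\<^sup>2 / 2" by simp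
  ultimately show ?thesis by linarith
qed

lemma step_gap: "0 < 1 / \<tau> - L"
proof -
  have "0 \<le> \<sigma> * \<tau> * M\<^sup>2" using step_sizes(1,2) by simp
  then have "\<tau> * L < 1" using step_sizes(3) by linarith
  then show ?thesis using step_sizes(2) by (simp add: field_simps)
qed

lemma x_interior: "x k \<in> interior (edom \<phi>p)"
  by (induction k) (simp_all add: x0 x_iter bprox_welldefD(2)[OF proxp])

lemma z_interior: "z k \<in> interior (edom \<phi>d)"
  by (induction k) (simp_all add: z0 z_iter bprox_welldefD(2)[OF proxd])

lemma x_edom: "x k \<in> edom \<phi>p" "x k \<in> edom h"
  using x_interior interior_subset dom_sub by blast+

lemma z_edom: "z k \<in> edom \<phi>d"
  using z_interior interior_subset by blast

lemma primal_step:
  assumes u: "u \<in> edom \<phi>p" "u \<in> edom f"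
  shows "x (Suc k) \<in> edom f"
    and "\<tau> * (fr (x (Suc k)) + hr (x (Suc k)) - fr u - hr u + p k \<bullet> (A *v (x (Suc k) - u)))
           \<le> Dp u (x k) - Dp u (x (Suc k)) - (1 - \<tau> * L) * Dp (x (Suc k)) (x k)"
proof -
  define x1 where "x1 = x (Suc k)"
  have "is_bprox \<phi>p Gp (\<lambda>y. ereal \<tau> * f y) (x k) (\<tau> *\<^sub>R (transpose A *v p k) + \<tau> *\<^sub>R gh (x k)) x1"
    unfolding x1_def x_iter by (rule bprox_welldefD(1)[OF proxp x_interior])
  note prox = is_bprox_cmult_three_point[OF kp f_cc(2) f_not_MInfty step_sizes(2) this x_interior[of "Suc k", folded x1_def] u]
  from prox(1) show "x (Suc k) \<in> edom f" unfolding x1_def .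
  have "hr (x k) + gh (x k) \<bullet> (u - x k) \<le> hr u"
    using h_gradient_ineq x_edom(2) u(1) dom_sub by blast
  moreover have "hr x1 - hr (x k) - gh (x k) \<bullet> (x1 - x k) \<le> L * Dp x1 (x k)"
    using h_smooth x_edom(1) x_interior unfolding x1_def by blast
  moreover have "gh (x k) \<bullet> (x1 - u) = gh (x k) \<bullet> (x1 - x k) - gh (x k) \<bullet> (u - x k)"
    by (simp add: inner_diff_right)
  ultimately have "\<tau> * (hr x1 - hr u) \<le> \<tau> * (gh (x k) \<bullet> (x1 - u) + L * Dp x1 (x k))"
    using step_sizes(2) by (intro mult_left_mono) auto
  moreover have "(\<tau> *\<^sub>R (transpose A *v p k) + \<tau> *\<^sub>R gh (x k)) \<bullet> (x1 - u)
      = \<tau> * (p k \<bullet> (A *v (x1 - u))) + \<tau> * (gh (x k) \<bullet> (x1 - u))"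
    by (simp only: inner_add_left inner_scaleR_left inner_transpose_mult)
  ultimately show "\<tau> * (fr (x (Suc k)) + hr (x (Suc k)) - fr u - hr u + p k \<bullet> (A *v (x (Suc k) - u)))
      \<le> Dp u (x k) - Dp u (x (Suc k)) - (1 - \<tau> * L) * Dp (x (Suc k)) (x k)"
    using prox(2) unfolding x1_def[symmetric] by (simp add: algebra_simps)
qed

lemma dual_step:
  assumes w: "w \<in> edom \<phi>d" "w \<in> edom (conjugate g)"
  shows "z (Suc k) \<in> edom (conjugate g)"
    and "\<sigma> * (cr (z (Suc k)) - cr w - (z (Suc k) - w) \<bullet> (A *v q k))
           \<le> Dd w (z k) - Dd w (z (Suc k)) - Dd (z (Suc k)) (z k)"
proof -
  have "is_bprox \<phi>d Gd (\<lambda>w. ereal \<sigma> * conjugate g w) (z k) (- \<sigma> *\<^sub>R (A *v q k)) (z (Suc k))"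
    unfolding z_iter by (rule bprox_welldefD(1)[OF proxd z_interior])
  note prox = is_bprox_cmult_three_point[OF kd econvex_conjugate conjugate_not_MInfty step_sizes(1) this z_interior w]
  from prox(1) show "z (Suc k) \<in> edom (conjugate g)" .
  have "(- \<sigma> *\<^sub>R (A *v q k)) \<bullet> (z (Suc k) - w) = - \<sigma> * ((z (Suc k) - w) \<bullet> (A *v q k))"
    by (simp add: inner_commute)
  then show "\<sigma> * (cr (z (Suc k)) - cr w - (z (Suc k) - w) \<bullet> (A *v q k))
      \<le> Dd w (z k) - Dd w (z (Suc k)) - Dd (z (Suc k)) (z k)"
    using prox(2) by (simp add: algebra_simps)
qed

lemma primal_step_le:
  assumes "u \<in> edom \<phi>p" "u \<in> edom f"
  shows "fr (x (Suc k)) + hr (x (Suc k))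
           \<le> fr u + hr u + p k \<bullet> (A *v (u - x (Suc k))) + (Dp u (x k) - Dp u (x (Suc k))) / \<tau>"
proof -
  have "0 \<le> 1 - \<tau> * L" using step_gap step_sizes(2) by (simp add: field_simps)
  then have "0 \<le> (1 - \<tau> * L) * Dp (x (Suc k)) (x k)"
    using Dp_nonneg[OF x_edom(1) x_interior] by simp
  then have "\<tau> * (fr (x (Suc k)) + hr (x (Suc k)) - fr u - hr u + p k \<bullet> (A *v (x (Suc k) - u)))
      \<le> Dp u (x k) - Dp u (x (Suc k))"
    using primal_step(2)[OF assms, of k] by linarith
  then have "(fr (x (Suc k)) + hr (x (Suc k)) - fr u - hr u + p k \<bullet> (A *v (x (Suc k) - u))) * \<tau>
      \<le> Dp u (x k) - Dp u (x (Suc k))"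
    by (simp only: mult.commute)
  then have "fr (x (Suc k)) + hr (x (Suc k)) - fr u - hr u + p k \<bullet> (A *v (x (Suc k) - u))
      \<le> (Dp u (x k) - Dp u (x (Suc k))) / \<tau>"
    by (rule mult_imp_le_div_pos[OF step_sizes(2)])
  moreover have "p k \<bullet> (A *v (x (Suc k) - u)) = - (p k \<bullet> (A *v (u - x (Suc k))))"
    by (simp add: matrix_vector_mult_diff_distrib inner_diff_right)
  ultimately show ?thesis by linarith
qed

lemma dual_step_le:
  assumes "w \<in> edom \<phi>d" "w \<in> edom (conjugate g)"
  shows "cr (z (Suc k)) \<le> cr w + (z (Suc k) - w) \<bullet> (A *v q k) + (Dd w (z k) - Dd w (z (Suc k))) / \<sigma>"
proof -
  have "0 \<le> Dd (z (Suc k)) (z k)" using Dd_nonneg[OF z_edom z_interior] .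
  then have "\<sigma> * (cr (z (Suc k)) - cr w - (z (Suc k) - w) \<bullet> (A *v q k)) \<le> Dd w (z k) - Dd w (z (Suc k))"
    using dual_step(2)[OF assms, of k] by linarith
  then have "(cr (z (Suc k)) - cr w - (z (Suc k) - w) \<bullet> (A *v q k)) * \<sigma> \<le> Dd w (z k) - Dd w (z (Suc k))"
    by (simp only: mult.commute)
  then have "cr (z (Suc k)) - cr w - (z (Suc k) - w) \<bullet> (A *v q k) \<le> (Dd w (z k) - Dd w (z (Suc k))) / \<sigma>"
    by (rule mult_imp_le_div_pos[OF step_sizes(1)])
  then show ?thesis by linarith
qed

text \<open>By AM-GM \<open>\<theta>\<^sup>2 \<ge> M\<^sup>2 \<sigma> / (1/\<tau> - L)\<close>, and \<open>\<theta> < 1\<close> by the step-size condition;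
  this one constant serves both Young estimates of the coupling term.\<close>

definition \<theta> :: real where
  "\<theta> = (1 + M\<^sup>2 * \<sigma> / (1 / \<tau> - L)) / 2"

lemma theta: "0 < \<theta>" "\<theta> < 1" "M\<^sup>2 * \<sigma> \<le> \<theta>\<^sup>2 * (1 / \<tau> - L)" "M\<^sup>2 * \<sigma> * \<tau> \<le> \<theta>\<^sup>2"
proof -
  define \<rho> where "\<rho> = M\<^sup>2 * \<sigma> / (1 / \<tau> - L)"
  have "M\<^sup>2 * \<sigma> < 1 / \<tau> - L"
    using step_sizes by (simp add: field_simps mult.commute mult.left_commute)
  moreover have "0 \<le> M\<^sup>2 * \<sigma>" using step_sizes(1) by simp
  ultimately have \<rho>: "0 \<le> \<rho>" "\<rho> < 1"
    using step_gap unfolding \<rho>_def by (simp_all add: field_simps)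
  have \<theta>: "\<theta> = (1 + \<rho>) / 2" unfolding \<theta>_def \<rho>_def ..
  show "0 < \<theta>" "\<theta> < 1" unfolding \<theta> using \<rho> by simp_all
  have "\<theta>\<^sup>2 - \<rho> = ((1 - \<rho>) / 2)\<^sup>2" unfolding \<theta> by (simp add: power2_eq_square field_simps)
  then have "\<rho> \<le> \<theta>\<^sup>2" by (metis diff_ge_0_iff_ge zero_le_power2)
  then show M: "M\<^sup>2 * \<sigma> \<le> \<theta>\<^sup>2 * (1 / \<tau> - L)"
    using step_gap unfolding \<rho>_def by (simp add: divide_le_eq)
  have "M\<^sup>2 * \<sigma> * \<tau> \<le> \<theta>\<^sup>2 * (1 / \<tau> - L) * \<tau>"
    using mult_right_mono[OF M, of \<tau>] step_sizes(2) by simp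
  also have "\<dots> = \<theta>\<^sup>2 - L * \<tau> * \<theta>\<^sup>2" using step_sizes(2) by (simp add: field_simps)
  also have "\<dots> \<le> \<theta>\<^sup>2" using L_pos step_sizes(2) by simp
  finally show "M\<^sup>2 * \<sigma> * \<tau> \<le> \<theta>\<^sup>2" .
qed

lemma coupling_le:
  assumes "0 < \<alpha>" "M\<^sup>2 \<le> \<alpha> * \<beta>" "(Np v)\<^sup>2 / 2 \<le> P" "(Nd w)\<^sup>2 / 2 \<le> Q"
  shows "s * (w \<bullet> (A *v v)) \<le> \<alpha> * P + \<beta> * Q"
proof -
  have "s = 1 \<or> s = -1" using variant by auto
  then have "s * (w \<bullet> (A *v v)) \<le> M * Np v * Nd w"
    using opnorm_bound[OF Np_norm Nd_norm, of w A v] by (auto simp: abs_le_iff mult_ac)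
  also have "\<dots> \<le> (\<alpha> * (Np v)\<^sup>2 + \<beta> * (Nd w)\<^sup>2) / 2"
    by (rule mult_le_weighted_squares[OF assms(1,2)])
  also have "\<dots> \<le> \<alpha> * P + \<beta> * Q"
  proof -
    have "0 \<le> \<alpha> * \<beta>" using assms(2) by (meson order_trans zero_le_power2)
    then have "0 \<le> \<beta>" using assms(1) by (simp add: zero_le_mult_iff)
    with assms(4) have "\<beta> * ((Nd w)\<^sup>2 / 2) \<le> \<beta> * Q" by (rule mult_left_mono)
    moreover have "\<alpha> * ((Np v)\<^sup>2 / 2) \<le> \<alpha> * P" using assms(1,3) by simp
    ultimately show ?thesis by (simp add: add_divide_distrib)
  qed
  finally show ?thesis .
qed

lemma coupling_identity:
  "(p k - zs) \<bullet> (A *v (x (Suc k) - xs)) - (z (Suc k) - zs) \<bullet> (A *v (q k - xs))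
   = s * ((z k - zs) \<bullet> (A *v (x k - xs))) - s * ((z (Suc k) - zs) \<bullet> (A *v (x (Suc k) - xs)))
     - s * ((z (Suc k) - z k) \<bullet> (A *v (x (Suc k) - x k)))"
proof -
  consider (primal) "s = 1" "p k = z k" "q k = 2 *\<^sub>R x (Suc k) - x k"
    | (dual) "s = -1" "p k = 2 *\<^sub>R z (Suc k) - z k" "q k = x k"
    using variant by blast
  then show ?thesis
  proof cases
    case primal
    show ?thesis unfolding primal
      by (simp add: inner_diff_left inner_diff_right matrix_vector_mult_diff_distrib
          matrix_vector_mult_scaleR algebra_simps)
  next
    case dual
    show ?thesis unfolding dual
      by (simp add: inner_diff_left inner_diff_right matrix_vector_mult_diff_distrib algebra_simps)
  qed
qed

definition lyapunov :: "real^'n \<Rightarrow> real^'m \<Rightarrow> nat \<Rightarrow> real" where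
  "lyapunov xs zs k = Dp xs (x k) / \<tau> + Dd zs (z k) / \<sigma> - s * ((z k - zs) \<bullet> (A *v (x k - xs)))"


lemma primal_step_kkt:
  assumes kkt: "kkt_point xs zs"
  shows "(p k - zs) \<bullet> (A *v (x (Suc k) - xs))
           \<le> Dp xs (x k) / \<tau> - Dp xs (x (Suc k)) / \<tau> - (1 / \<tau> - L) * Dp (x (Suc k)) (x k)"
proof -
  note S = kkt_point_edom[OF kkt]
  have "\<tau> * ((p k - zs) \<bullet> (A *v (x (Suc k) - xs)))
      \<le> \<tau> * (fr (x (Suc k)) + hr (x (Suc k)) - fr xs - hr xs + p k \<bullet> (A *v (x (Suc k) - xs)))"
    using kkt_primal_le[OF kkt primal_step(1)[OF S(1,3), of k] x_edom(2)[of "Suc k"]] step_sizes(2)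
    by (intro mult_left_mono) (auto simp: inner_diff_left)
  also have "\<dots> \<le> Dp xs (x k) - Dp xs (x (Suc k)) - (1 - \<tau> * L) * Dp (x (Suc k)) (x k)"
    using primal_step(2)[OF S(1,3)] .
  finally have "(p k - zs) \<bullet> (A *v (x (Suc k) - xs))
      \<le> (Dp xs (x k) - Dp xs (x (Suc k)) - (1 - \<tau> * L) * Dp (x (Suc k)) (x k)) / \<tau>"
    using step_sizes(2) by (simp add: pos_le_divide_eq mult.commute)
  also have "\<dots> = Dp xs (x k) / \<tau> - Dp xs (x (Suc k)) / \<tau> - (1 / \<tau> - L) * Dp (x (Suc k)) (x k)"
    using step_sizes(2) by (simp add: field_simps)
  finally show ?thesis .
qed

lemma dual_step_kkt:
  assumes kkt: "kkt_point xs zs"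
  shows "- ((z (Suc k) - zs) \<bullet> (A *v (q k - xs)))
           \<le> Dd zs (z k) / \<sigma> - Dd zs (z (Suc k)) / \<sigma> - Dd (z (Suc k)) (z k) / \<sigma>"
proof -
  note S = kkt_point_edom[OF kkt]
  have "\<sigma> * (- ((z (Suc k) - zs) \<bullet> (A *v (q k - xs))))
      \<le> \<sigma> * (cr (z (Suc k)) - cr zs - (z (Suc k) - zs) \<bullet> (A *v q k))"
    using kkt_dual_le[OF kkt dual_step(1)[OF S(2,4), of k]] step_sizes(1)
    by (intro mult_left_mono) (auto simp: inner_diff_right matrix_vector_mult_diff_distrib)
  also have "\<dots> \<le> Dd zs (z k) - Dd zs (z (Suc k)) - Dd (z (Suc k)) (z k)"
    using dual_step(2)[OF S(2,4)] .
  finally have "- ((z (Suc k) - zs) \<bullet> (A *v (q k - xs)))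
      \<le> (Dd zs (z k) - Dd zs (z (Suc k)) - Dd (z (Suc k)) (z k)) / \<sigma>"
    using step_sizes(1) by (simp add: pos_le_divide_eq mult.commute)
  then show ?thesis by (simp add: diff_divide_distrib)
qed

lemma successive_coupling_le:
  "s * ((z (Suc k) - z k) \<bullet> (A *v (x (Suc k) - x k)))
     \<le> \<theta> * (1 / \<tau> - L) * Dp (x (Suc k)) (x k) + \<theta> / \<sigma> * Dd (z (Suc k)) (z k)"
proof (rule coupling_le)
  show "0 < \<theta> * (1 / \<tau> - L)" using theta(1) step_gap by simp
  show "M\<^sup>2 \<le> \<theta> * (1 / \<tau> - L) * (\<theta> / \<sigma>)"
    using theta(3) step_sizes(1) by (simp add: field_simps power2_eq_square)
  show "(Np (x (Suc k) - x k))\<^sup>2 / 2 \<le> Dp (x (Suc k)) (x k)"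
    using dp_strong x_edom(1) x_interior by blast
  show "(Nd (z (Suc k) - z k))\<^sup>2 / 2 \<le> Dd (z (Suc k)) (z k)"
    using dd_strong z_edom z_interior by blast
qed

lemma lyapunov_descent:
  assumes kkt: "kkt_point xs zs"
  shows "lyapunov xs zs (Suc k) + (1 - \<theta>) * ((1 / \<tau> - L) * Dp (x (Suc k)) (x k) + Dd (z (Suc k)) (z k) / \<sigma>)
           \<le> lyapunov xs zs k"
proof -
  have "(1 - \<theta>) * ((1 / \<tau> - L) * Dp (x (Suc k)) (x k) + Dd (z (Suc k)) (z k) / \<sigma>)
      = (1 / \<tau> - L) * Dp (x (Suc k)) (x k) + Dd (z (Suc k)) (z k) / \<sigma>
        - (\<theta> * (1 / \<tau> - L) * Dp (x (Suc k)) (x k) + \<theta> / \<sigma> * Dd (z (Suc k)) (z k))"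
    by (simp add: algebra_simps diff_divide_distrib)
  then show ?thesis
    using primal_step_kkt[OF kkt, of k] dual_step_kkt[OF kkt, of k] successive_coupling_le[of k]
      coupling_identity[of k zs xs]
    unfolding lyapunov_def by linarith
qed

lemma lyapunov_lower:
  assumes kkt: "kkt_point xs zs"
  shows "(1 - \<theta>) * (Dp xs (x k) / \<tau> + Dd zs (z k) / \<sigma>) \<le> lyapunov xs zs k"
proof -
  note S = kkt_point_edom[OF kkt]
  have "M\<^sup>2 \<le> (\<theta> / \<tau>) * (\<theta> / \<sigma>)"
    using theta(4) step_sizes(1,2) by (simp add: field_simps power2_eq_square)
  moreover have "(Np (xs - x k))\<^sup>2 / 2 \<le> Dp xs (x k)" using dp_strong S(1) x_interior by blast
  moreover have "(Nd (zs - z k))\<^sup>2 / 2 \<le> Dd zs (z k)" using dd_strong S(2) z_interior by blast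
  ultimately have "s * ((zs - z k) \<bullet> (A *v (xs - x k))) \<le> \<theta> / \<tau> * Dp xs (x k) + \<theta> / \<sigma> * Dd zs (z k)"
    using theta(1) step_sizes(2) by (intro coupling_le) auto
  moreover have "(zs - z k) \<bullet> (A *v (xs - x k)) = (z k - zs) \<bullet> (A *v (x k - xs))"
    by (simp add: matrix_vector_mult_diff_distrib inner_diff_left inner_diff_right)
  ultimately show ?thesis unfolding lyapunov_def by (simp add: algebra_simps)
qed

lemma lyapunov_nonneg:
  assumes "kkt_point xs zs" shows "0 \<le> lyapunov xs zs k"
proof -
  have "0 \<le> Dp xs (x k)" "0 \<le> Dd zs (z k)"
    using Dp_nonneg Dd_nonneg kkt_point_edom[OF assms] x_interior z_interior by blast+
  then have "0 \<le> (1 - \<theta>) * (Dp xs (x k) / \<tau> + Dd zs (z k) / \<sigma>)"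
    using theta(2) step_sizes(1,2) by simp
  then show ?thesis using lyapunov_lower[OF assms, of k] by linarith
qed

lemma lyapunov_decreasing:
  assumes "kkt_point xs zs" shows "lyapunov xs zs (Suc k) \<le> lyapunov xs zs k"
proof -
  have "0 \<le> Dp (x (Suc k)) (x k)" "0 \<le> Dd (z (Suc k)) (z k)"
    using Dp_nonneg Dd_nonneg x_edom(1) z_edom x_interior z_interior by blast+
  then have "0 \<le> (1 - \<theta>) * ((1 / \<tau> - L) * Dp (x (Suc k)) (x k) + Dd (z (Suc k)) (z k) / \<sigma>)"
    using theta(2) step_sizes(1) step_gap by simp
  then show ?thesis using lyapunov_descent[OF assms, of k] by linarith
qed

lemma lyapunov_decseq: "kkt_point xs zs \<Longrightarrow> decseq (lyapunov xs zs)"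
  using lyapunov_decreasing by (blast intro: decseq_SucI)

lemma lyapunov_convergent:
  assumes "kkt_point xs zs" obtains l where "lyapunov xs zs \<longlonglongrightarrow> l"
  using decseq_convergent[OF lyapunov_decseq[OF assms]] lyapunov_nonneg[OF assms] that by blast

lemma bdist_le_lyapunov:
  assumes "kkt_point xs zs"
  shows "Dp xs (x k) \<le> \<tau> / (1 - \<theta>) * lyapunov xs zs k" "Dd zs (z k) \<le> \<sigma> / (1 - \<theta>) * lyapunov xs zs k"
proof -
  have "0 < 1 - \<theta>" using theta(2) by simp
  moreover have "0 \<le> Dp xs (x k) / \<tau>" "0 \<le> Dd zs (z k) / \<sigma>"
    using Dp_nonneg Dd_nonneg kkt_point_edom[OF assms] x_interior z_interior step_sizes(1,2) by simp_all
  ultimately have "0 \<le> (1 - \<theta>) * (Dp xs (x k) / \<tau>)" "0 \<le> (1 - \<theta>) * (Dd zs (z k) / \<sigma>)"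
    by (simp_all only: mult_nonneg_nonneg less_imp_le)
  moreover have "(1 - \<theta>) * (Dp xs (x k) / \<tau>) + (1 - \<theta>) * (Dd zs (z k) / \<sigma>) \<le> lyapunov xs zs k"
    using lyapunov_lower[OF assms, of k] by (simp only: distrib_left)
  ultimately have "(1 - \<theta>) * (Dp xs (x k) / \<tau>) \<le> lyapunov xs zs k" "(1 - \<theta>) * (Dd zs (z k) / \<sigma>) \<le> lyapunov xs zs k"
    by linarith+
  then show "Dp xs (x k) \<le> \<tau> / (1 - \<theta>) * lyapunov xs zs k" "Dd zs (z k) \<le> \<sigma> / (1 - \<theta>) * lyapunov xs zs k"
    using \<open>0 < 1 - \<theta>\<close> step_sizes(1,2) by (simp_all add: field_simps)
qed


lemma lyapunov_decrement_ge:
  assumes "kkt_point xs zs"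
  shows "(1 - \<theta>) * min (1 / \<tau> - L) (1 / \<sigma>) * (Dp (x (Suc k)) (x k) + Dd (z (Suc k)) (z k))
           \<le> lyapunov xs zs k - lyapunov xs zs (Suc k)"
proof -
  define dx dz where "dx = Dp (x (Suc k)) (x k)" and "dz = Dd (z (Suc k)) (z k)"
  have "0 \<le> dx" "0 \<le> dz"
    unfolding dx_def dz_def using Dp_nonneg Dd_nonneg x_edom(1) x_interior z_edom z_interior by blast+
  then have "(1 - \<theta>) * min (1 / \<tau> - L) (1 / \<sigma>) * dx \<le> (1 - \<theta>) * (1 / \<tau> - L) * dx"
    "(1 - \<theta>) * min (1 / \<tau> - L) (1 / \<sigma>) * dz \<le> (1 - \<theta>) * (1 / \<sigma>) * dz"
    using theta(2) by (intro mult_right_mono mult_left_mono; simp)+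
  moreover have "(1 - \<theta>) * ((1 / \<tau> - L) * dx + dz / \<sigma>)
      = (1 - \<theta>) * (1 / \<tau> - L) * dx + (1 - \<theta>) * (1 / \<sigma>) * dz" by (simp add: algebra_simps)
  moreover have "(1 - \<theta>) * min (1 / \<tau> - L) (1 / \<sigma>) * (dx + dz)
      = (1 - \<theta>) * min (1 / \<tau> - L) (1 / \<sigma>) * dx + (1 - \<theta>) * min (1 / \<tau> - L) (1 / \<sigma>) * dz"
    by (rule distrib_left)
  ultimately show ?thesis
    using lyapunov_descent[OF assms, of k] unfolding dx_def[symmetric] dz_def[symmetric] by linarith
qed

lemma successive_differences_tendsto_zero:
  "(\<lambda>k. x (Suc k) - x k) \<longlonglongrightarrow> 0" "(\<lambda>k. z (Suc k) - z k) \<longlonglongrightarrow> 0"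
proof -
  obtain xs zs where kkt: "kkt_point xs zs" using kkt_point_exists by blast
  obtain l where "lyapunov xs zs \<longlonglongrightarrow> l" using lyapunov_convergent[OF kkt] .
  then have "(\<lambda>k. lyapunov xs zs k - lyapunov xs zs (Suc k)) \<longlonglongrightarrow> 0"
    using tendsto_diff[OF _ LIMSEQ_Suc] by fastforce
  define c where "c = (1 - \<theta>) * min (1 / \<tau> - L) (1 / \<sigma>)"
  define e where "e k = 2 * ((lyapunov xs zs k - lyapunov xs zs (Suc k)) / c)" for k
  have c: "0 < c" unfolding c_def using theta(2) step_gap step_sizes(1) by simp
  have lim: "e \<longlonglongrightarrow> 0"
    unfolding e_def by (intro tendsto_mult_right_zero tendsto_divide_zero) fact
  have bounds: "(Np (x (Suc k) - x k))\<^sup>2 \<le> e k" "(Nd (z (Suc k) - z k))\<^sup>2 \<le> e k" for k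
  proof -
    have "Dp (x (Suc k)) (x k) + Dd (z (Suc k)) (z k) \<le> (lyapunov xs zs k - lyapunov xs zs (Suc k)) / c"
      using lyapunov_decrement_ge[OF kkt, of k] c unfolding c_def by (simp add: pos_le_divide_eq mult.commute)
    moreover have "(Np (x (Suc k) - x k))\<^sup>2 / 2 \<le> Dp (x (Suc k)) (x k)"
      "(Nd (z (Suc k) - z k))\<^sup>2 / 2 \<le> Dd (z (Suc k)) (z k)"
      using dp_strong dd_strong x_edom(1) x_interior z_edom z_interior by blast+
    moreover have "0 \<le> Dp (x (Suc k)) (x k)" "0 \<le> Dd (z (Suc k)) (z k)"
      using Dp_nonneg Dd_nonneg x_edom(1) x_interior z_edom z_interior by blast+
    ultimately show "(Np (x (Suc k) - x k))\<^sup>2 \<le> e k" "(Nd (z (Suc k) - z k))\<^sup>2 \<le> e k"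
      unfolding e_def by linarith+
  qed
  show "(\<lambda>k. x (Suc k) - x k) \<longlonglongrightarrow> 0" by (rule is_norm_sq_tendsto_zero[OF Np_norm bounds(1) lim])
  show "(\<lambda>k. z (Suc k) - z k) \<longlonglongrightarrow> 0" by (rule is_norm_sq_tendsto_zero[OF Nd_norm bounds(2) lim])
qed

lemma iterates_bdist_bounded:
  assumes "kkt_point xs zs"
  shows "Dp xs (x k) \<le> \<tau> / (1 - \<theta>) * lyapunov xs zs 0" "Dd zs (z k) \<le> \<sigma> / (1 - \<theta>) * lyapunov xs zs 0"
proof -
  have "lyapunov xs zs k \<le> lyapunov xs zs 0"
    using decseqD[OF lyapunov_decseq[OF assms]] by simp
  moreover have "0 \<le> \<tau> / (1 - \<theta>)" "0 \<le> \<sigma> / (1 - \<theta>)" using theta(2) step_sizes(1,2) by simp_all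
  ultimately have "\<tau> / (1 - \<theta>) * lyapunov xs zs k \<le> \<tau> / (1 - \<theta>) * lyapunov xs zs 0"
    "\<sigma> / (1 - \<theta>) * lyapunov xs zs k \<le> \<sigma> / (1 - \<theta>) * lyapunov xs zs 0"
    by (simp_all only: mult_left_mono)
  then show "Dp xs (x k) \<le> \<tau> / (1 - \<theta>) * lyapunov xs zs 0" "Dd zs (z k) \<le> \<sigma> / (1 - \<theta>) * lyapunov xs zs 0"
    using bdist_le_lyapunov[OF assms, of k] by linarith+
qed

lemma cluster_point_exists:
  obtains r xh zh where "strict_mono r" "(\<lambda>j. x (r j)) \<longlonglongrightarrow> xh" "(\<lambda>j. z (r j)) \<longlonglongrightarrow> zh"
proof -
  obtain xs zs where kkt: "kkt_point xs zs" using kkt_point_exists by blast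
  note S = kkt_point_edom[OF kkt]
  have "(Np (xs - x k))\<^sup>2 \<le> 2 * (\<tau> / (1 - \<theta>) * lyapunov xs zs 0)" for k
    using dp_strong[rule_format, OF S(1) x_interior, of k] iterates_bdist_bounded(1)[OF kkt, of k] by linarith
  then have "bounded (range x)" by (rule is_norm_sq_bounded_range[OF Np_norm])
  moreover have "(Nd (zs - z k))\<^sup>2 \<le> 2 * (\<sigma> / (1 - \<theta>) * lyapunov xs zs 0)" for k
    using dd_strong[rule_format, OF S(2) z_interior, of k] iterates_bdist_bounded(2)[OF kkt, of k] by linarith
  then have "bounded (range z)" by (rule is_norm_sq_bounded_range[OF Nd_norm])
  ultimately have "bounded (range x \<times> range z)" by (rule bounded_Times)
  then have "bounded (range (\<lambda>k. (x k, z k)))" by (rule bounded_subset) auto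
  then obtain r l where r: "strict_mono r" and lim: "((\<lambda>k. (x k, z k)) \<circ> r) \<longlonglongrightarrow> l"
    using bounded_imp_convergent_subsequence by blast
  have "(\<lambda>j. x (r j)) \<longlonglongrightarrow> fst l" "(\<lambda>j. z (r j)) \<longlonglongrightarrow> snd l"
    using tendsto_fst[OF lim] tendsto_snd[OF lim] by (simp_all add: o_def)
  with r show ?thesis by (rule that)
qed


context
  fixes r :: "nat \<Rightarrow> nat" and xh :: "real^'n" and zh :: "real^'m"
  assumes r: "strict_mono r" and x_r: "(\<lambda>j. x (r j)) \<longlonglongrightarrow> xh" and z_r: "(\<lambda>j. z (r j)) \<longlonglongrightarrow> zh"
begin

text \<open>The closedness of the Bregman sublevel sets keeps cluster points in the interior of the
  kernel domains, where the kernels are differentiable.\<close>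

lemma cluster_interior: "xh \<in> interior (edom \<phi>p)" "zh \<in> interior (edom \<phi>d)"
proof -
  obtain xs zs where kkt: "kkt_point xs zs" using kkt_point_exists by blast
  note S = kkt_point_edom[OF kkt]
  define Bx Bz where "Bx = \<tau> / (1 - \<theta>) * lyapunov xs zs 0" and "Bz = \<sigma> / (1 - \<theta>) * lyapunov xs zs 0"
  have "closed {y \<in> interior (edom \<phi>p). Dp xs y \<le> Bx}" using closed_dp S(1) by blast
  moreover have "x (r j) \<in> {y \<in> interior (edom \<phi>p). Dp xs y \<le> Bx}" for j
    unfolding Bx_def using x_interior iterates_bdist_bounded(1)[OF kkt] by blast
  ultimately have "xh \<in> {y \<in> interior (edom \<phi>p). Dp xs y \<le> Bx}"
    by (rule closed_sequentially) (rule x_r)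
  then show "xh \<in> interior (edom \<phi>p)" by blast
  have "closed {w \<in> interior (edom \<phi>d). Dd zs w \<le> Bz}" using closed_dd S(2) by blast
  moreover have "z (r j) \<in> {w \<in> interior (edom \<phi>d). Dd zs w \<le> Bz}" for j
    unfolding Bz_def using z_interior iterates_bdist_bounded(2)[OF kkt] by blast
  ultimately have "zh \<in> {w \<in> interior (edom \<phi>d). Dd zs w \<le> Bz}"
    by (rule closed_sequentially) (rule z_r)
  then show "zh \<in> interior (edom \<phi>d)" by blast
qed

lemma cluster_shifted:
  "(\<lambda>j. x (Suc (r j))) \<longlonglongrightarrow> xh" "(\<lambda>j. z (Suc (r j))) \<longlonglongrightarrow> zh"
  "(\<lambda>j. p (r j)) \<longlonglongrightarrow> zh" "(\<lambda>j. q (r j)) \<longlonglongrightarrow> xh"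
proof -
  have "(\<lambda>j. x (Suc (r j)) - x (r j)) \<longlonglongrightarrow> 0" "(\<lambda>j. z (Suc (r j)) - z (r j)) \<longlonglongrightarrow> 0"
    using LIMSEQ_subseq_LIMSEQ[OF successive_differences_tendsto_zero(1) r]
      LIMSEQ_subseq_LIMSEQ[OF successive_differences_tendsto_zero(2) r] by (simp_all add: o_def)
  from tendsto_add[OF x_r this(1)] tendsto_add[OF z_r this(2)]
  show x1: "(\<lambda>j. x (Suc (r j))) \<longlonglongrightarrow> xh" and z1: "(\<lambda>j. z (Suc (r j))) \<longlonglongrightarrow> zh" by simp_all
  have "(\<lambda>j. 2 *\<^sub>R x (Suc (r j)) - x (r j)) \<longlonglongrightarrow> 2 *\<^sub>R xh - xh"
    "(\<lambda>j. 2 *\<^sub>R z (Suc (r j)) - z (r j)) \<longlonglongrightarrow> 2 *\<^sub>R zh - zh"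
    by (intro tendsto_intros x1 z1 x_r z_r)+
  moreover have "2 *\<^sub>R xh - xh = xh" "2 *\<^sub>R zh - zh = zh" by (simp_all add: scaleR_2)
  ultimately show "(\<lambda>j. p (r j)) \<longlonglongrightarrow> zh" "(\<lambda>j. q (r j)) \<longlonglongrightarrow> xh"
    using variant x_r z_r by auto
qed

lemma cluster_h_continuous: "isCont hr xh"
proof -
  have "xh \<in> edom h" using cluster_interior(1) interior_subset dom_sub by blast
  then have "(hr has_derivative (\<lambda>d. gh xh \<bullet> d)) (at xh)" using h_diff by blast
  then show ?thesis by (rule has_derivative_continuous)
qed

lemma cluster_primal_le:
  assumes u: "u \<in> edom \<phi>p" "u \<in> edom f"
  shows "f xh \<le> ereal (fr u + hr u - hr xh + zh \<bullet> (A *v (u - xh)))"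
proof (rule eclosed_limit_le[OF f_cc(1) cluster_shifted(1)])
  define c where "c j = fr u + hr u - hr (x (Suc (r j))) + p (r j) \<bullet> (A *v (u - x (Suc (r j))))
      + (Dp u (x (r j)) - Dp u (x (Suc (r j)))) / \<tau>" for j
  show "f (x (Suc (r j))) \<le> ereal (c j)" for j
  proof -
    have eq: "f (x (Suc (r j))) = ereal (fr (x (Suc (r j))))"
      using edom_ereal_real[of f, OF _ primal_step(1)[OF u]] f_not_MInfty by simp
    have "fr (x (Suc (r j))) \<le> c j" using primal_step_le[OF u, of "r j"] unfolding c_def by linarith
    then show ?thesis by (subst eq) simp
  qed
  have hx: "(\<lambda>j. hr (x (Suc (r j)))) \<longlonglongrightarrow> hr xh"
    using isCont_tendsto_compose[OF cluster_h_continuous cluster_shifted(1)] .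
  have ax: "(\<lambda>j. A *v (u - x (Suc (r j)))) \<longlonglongrightarrow> A *v (u - xh)"
    using bounded_linear.tendsto[OF matrix_vector_mul_bounded_linear tendsto_diff[OF tendsto_const cluster_shifted(1)]] .
  have "c \<longlonglongrightarrow> fr u + hr u - hr xh + zh \<bullet> (A *v (u - xh)) + (Dp u xh - Dp u xh) / \<tau>"
    unfolding c_def
    using step_sizes(2)
    by (intro tendsto_add tendsto_diff tendsto_inner tendsto_divide tendsto_const hx ax
        cluster_shifted(3) bdist_tendsto[OF kp cluster_interior(1) x_r]
        bdist_tendsto[OF kp cluster_interior(1) cluster_shifted(1)]) simp
  then show "c \<longlonglongrightarrow> fr u + hr u - hr xh + zh \<bullet> (A *v (u - xh))" by simp
qed

lemma cluster_dual_le: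
  assumes w: "w \<in> edom \<phi>d" "w \<in> edom (conjugate g)"
  shows "conjugate g zh \<le> ereal (cr w - (w - zh) \<bullet> (A *v xh))"
proof (rule eclosed_limit_le[OF eclosed_conjugate cluster_shifted(2)])
  define c where "c j = cr w + (z (Suc (r j)) - w) \<bullet> (A *v q (r j))
      + (Dd w (z (r j)) - Dd w (z (Suc (r j)))) / \<sigma>" for j
  show "conjugate g (z (Suc (r j))) \<le> ereal (c j)" for j
  proof -
    have eq: "conjugate g (z (Suc (r j))) = ereal (cr (z (Suc (r j))))"
      using edom_ereal_real[of "conjugate g", OF _ dual_step(1)[OF w]] conjugate_not_MInfty by simp
    have "cr (z (Suc (r j))) \<le> c j" using dual_step_le[OF w, of "r j"] unfolding c_def .
    then show ?thesis by (subst eq) simp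
  qed
  have "(\<lambda>j. A *v q (r j)) \<longlonglongrightarrow> A *v xh"
    using bounded_linear.tendsto[OF matrix_vector_mul_bounded_linear cluster_shifted(4)] .
  then have "c \<longlonglongrightarrow> cr w + (zh - w) \<bullet> (A *v xh) + (Dd w zh - Dd w zh) / \<sigma>"
    unfolding c_def
    using step_sizes(1)
    by (intro tendsto_add tendsto_diff tendsto_inner tendsto_divide tendsto_const
        \<open>(\<lambda>j. A *v q (r j)) \<longlonglongrightarrow> A *v xh\<close> cluster_shifted(2) bdist_tendsto[OF kd cluster_interior(2) z_r]
        bdist_tendsto[OF kd cluster_interior(2) cluster_shifted(2)]) simp
  then show "c \<longlonglongrightarrow> cr w - (w - zh) \<bullet> (A *v xh)"
    by (simp add: inner_diff_left algebra_simps)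
qed

lemma cluster_primal_subdiff: "- (transpose A *v zh) - gh xh \<in> subdiff f xh"
proof -
  obtain xs zs where kkt: "kkt_point xs zs" using kkt_point_exists by blast
  have "f xh < \<infinity>" using cluster_primal_le[OF kkt_point_edom(1,3)[OF kkt]] by (rule le_less_trans) simp
  then have xh_f: "xh \<in> edom f" unfolding edom_def by simp
  have "xh \<in> edom h" using cluster_interior(1) interior_subset dom_sub by blast
  then have "(hr has_derivative (\<lambda>d. gh xh \<bullet> d)) (at xh)" using h_diff by blast
  then show ?thesis
  proof (rule local_min_imp_subdiff[OF f_cc(2) f_not_MInfty xh_f _ open_interior cluster_interior(1)])
    fix u assume "u \<in> interior (edom \<phi>p)" "u \<in> edom f"
    then have le: "f xh \<le> ereal (fr u + hr u - hr xh + zh \<bullet> (A *v (u - xh)))"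
      using cluster_primal_le interior_subset by blast
    have eq: "f xh = ereal (fr xh)"
      using edom_ereal_real[of f, OF _ xh_f] f_not_MInfty by simp
    have "fr xh \<le> fr u + hr u - hr xh + zh \<bullet> (A *v (u - xh))"
      using le by (subst (asm) eq) simp
    then show "fr xh + hr xh \<le> fr u + hr u + (transpose A *v zh) \<bullet> (u - xh)"
      unfolding inner_transpose_mult by linarith
  qed
qed

lemma cluster_dual_subdiff: "A *v xh \<in> subdiff (conjugate g) zh"
proof -
  obtain xs zs where kkt: "kkt_point xs zs" using kkt_point_exists by blast
  have "conjugate g zh < \<infinity>"
    using cluster_dual_le[OF kkt_point_edom(2,4)[OF kkt]] by (rule le_less_trans) simp
  then have zh_c: "zh \<in> edom (conjugate g)" unfolding edom_def by simp
  have "- (- (A *v xh)) - 0 \<in> subdiff (conjugate g) zh"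
  proof (rule local_min_imp_subdiff[OF econvex_conjugate conjugate_not_MInfty zh_c _
        open_interior cluster_interior(2)])
    show "((\<lambda>_. 0) has_derivative (\<lambda>d. 0 \<bullet> d)) (at zh)" by simp
    fix w assume "w \<in> interior (edom \<phi>d)" "w \<in> edom (conjugate g)"
    then have le: "conjugate g zh \<le> ereal (cr w - (w - zh) \<bullet> (A *v xh))"
      using cluster_dual_le interior_subset by blast
    have eq: "conjugate g zh = ereal (cr zh)"
      using edom_ereal_real[of "conjugate g", OF _ zh_c] conjugate_not_MInfty by simp
    have "cr zh \<le> cr w - (w - zh) \<bullet> (A *v xh)"
      using le by (subst (asm) eq) simp
    then show "cr zh + 0 \<le> cr w + 0 + (- (A *v xh)) \<bullet> (w - zh)"
      by (simp add: inner_commute)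
  qed
  then show ?thesis by simp
qed

lemma cluster_kkt_point: "kkt_point xh zh"
  unfolding kkt_point_def
  using cluster_interior interior_subset[of "edom \<phi>p"] interior_subset[of "edom \<phi>d"]
    cluster_primal_subdiff cluster_dual_subdiff
  by blast

lemma cluster_lyapunov_tendsto_zero: "(\<lambda>j. lyapunov xh zh (r j)) \<longlonglongrightarrow> 0"
proof -
  note I = cluster_interior
  have "(\<lambda>j. A *v (x (r j) - xh)) \<longlonglongrightarrow> A *v (xh - xh)"
    using bounded_linear.tendsto[OF matrix_vector_mul_bounded_linear tendsto_diff[OF x_r tendsto_const]] .
  then have "(\<lambda>j. lyapunov xh zh (r j)) \<longlonglongrightarrow> Dp xh xh / \<tau> + Dd zh zh / \<sigma> - s * ((zh - zh) \<bullet> (A *v (xh - xh)))"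
    unfolding lyapunov_def using step_sizes(1,2)
    by (intro tendsto_diff tendsto_add tendsto_divide tendsto_mult tendsto_inner tendsto_const
        bdist_tendsto[OF kp I(1) x_r] bdist_tendsto[OF kd I(2) z_r] z_r) simp_all
  then show ?thesis by (simp add: bdist_def)
qed

end

lemma lyapunov_tendsto_zero_imp_convergence:
  assumes kkt: "kkt_point xs zs" and to_zero: "lyapunov xs zs \<longlonglongrightarrow> 0"
  shows "x \<longlonglongrightarrow> xs" "z \<longlonglongrightarrow> zs"
proof -
  note S = kkt_point_edom[OF kkt]
  have lim: "(\<lambda>k. 2 * (\<tau> / (1 - \<theta>) * lyapunov xs zs k)) \<longlonglongrightarrow> 0"
    "(\<lambda>k. 2 * (\<sigma> / (1 - \<theta>) * lyapunov xs zs k)) \<longlonglongrightarrow> 0"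
    by (intro tendsto_mult_right_zero to_zero)+
  have "(Np (xs - x k))\<^sup>2 \<le> 2 * (\<tau> / (1 - \<theta>) * lyapunov xs zs k)"
    "(Nd (zs - z k))\<^sup>2 \<le> 2 * (\<sigma> / (1 - \<theta>) * lyapunov xs zs k)" for k
    using dp_strong[rule_format, OF S(1) x_interior, of k] dd_strong[rule_format, OF S(2) z_interior, of k]
      bdist_le_lyapunov[OF kkt, of k] by linarith+
  then have "(\<lambda>k. xs - x k) \<longlonglongrightarrow> 0" "(\<lambda>k. zs - z k) \<longlonglongrightarrow> 0"
    using is_norm_sq_tendsto_zero[OF Np_norm _ lim(1)] is_norm_sq_tendsto_zero[OF Nd_norm _ lim(2)]
    by simp_all
  from tendsto_diff[OF tendsto_const this(1), of xs] tendsto_diff[OF tendsto_const this(2), of zs]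
  show "x \<longlonglongrightarrow> xs" "z \<longlonglongrightarrow> zs" by simp_all
qed

lemma iterates_converge:
  "\<exists>xh zh. x \<longlonglongrightarrow> xh \<and> z \<longlonglongrightarrow> zh \<and> xh \<in> edom h
            \<and> - (transpose A *v zh) - gh xh \<in> subdiff f xh \<and> A *v xh \<in> subdiff (conjugate g) zh"
proof -
  obtain r xh zh where cl: "strict_mono r" "(\<lambda>j. x (r j)) \<longlonglongrightarrow> xh" "(\<lambda>j. z (r j)) \<longlonglongrightarrow> zh"
    using cluster_point_exists by blast
  have kkt: "kkt_point xh zh" by (rule cluster_kkt_point[OF cl])
  obtain l where l: "lyapunov xh zh \<longlonglongrightarrow> l" using lyapunov_convergent[OF kkt] .
  have "(\<lambda>j. lyapunov xh zh (r j)) \<longlonglongrightarrow> l" using LIMSEQ_subseq_LIMSEQ[OF l cl(1)] by (simp add: o_def)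
  then have "l = 0" using cluster_lyapunov_tendsto_zero[OF cl] by (rule LIMSEQ_unique)
  with l have "x \<longlonglongrightarrow> xh" "z \<longlonglongrightarrow> zh" using lyapunov_tendsto_zero_imp_convergence[OF kkt] by simp_all
  moreover have "xh \<in> edom h" using kkt dom_sub unfolding kkt_point_def by blast
  ultimately show ?thesis using kkt unfolding kkt_point_def by blast
qed

end

theorem mainTheorem5:
  fixes f :: "real^'n \<Rightarrow> ereal" and h :: "real^'n \<Rightarrow> ereal" and gh :: "real^'n \<Rightarrow> real^'n"
    and g :: "real^'m \<Rightarrow> ereal" and A :: "real^'n^'m"
    and \<phi>p :: "real^'n \<Rightarrow> ereal" and Gp :: "real^'n \<Rightarrow> real^'n"
    and \<phi>d :: "real^'m \<Rightarrow> ereal" and Gd :: "real^'m \<Rightarrow> real^'m"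
    and Np :: "real^'n \<Rightarrow> real" and Nd :: "real^'m \<Rightarrow> real"
    and L \<sigma> \<tau> :: real
    and x :: "nat \<Rightarrow> real^'n" and z :: "nat \<Rightarrow> real^'m"
  assumes f_cc: "eclosed f" "econvex f"
    and g_cc: "eclosed g" "econvex g" "eproper g"
    and h_cc: "eclosed h" "econvex h"
    and h_dom: "open (edom h)" "convex (edom h)"
    and h_diff: "\<forall>y\<in>edom h. \<bar>h y\<bar> \<noteq> \<infinity> \<and>
                  ((\<lambda>w. real_of_ereal (h w)) has_derivative (\<lambda>d. gh y \<bullet> d)) (at y)"
    and fh_proper: "eproper (\<lambda>y. f y + h y)"
    and kp: "bkernel \<phi>p Gp" and kd: "bkernel \<phi>d Gd"
    and proxp: "bprox_welldef \<phi>p Gp (\<lambda>y. ereal \<tau> * f y)"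
    and proxd: "bprox_welldef \<phi>d Gd (\<lambda>w. ereal \<sigma> * conjugate g w)"
    and Np_norm: "is_norm Np" and Nd_norm: "is_norm Nd"
    and dp_strong: "\<forall>y\<in>edom \<phi>p. \<forall>y'\<in>interior (edom \<phi>p). bdist \<phi>p Gp y y' \<ge> (Np (y - y'))\<^sup>2 / 2"
    and dd_strong: "\<forall>w\<in>edom \<phi>d. \<forall>w'\<in>interior (edom \<phi>d). bdist \<phi>d Gd w w' \<ge> (Nd (w - w'))\<^sup>2 / 2"
    and dom_sub: "edom \<phi>p \<subseteq> edom h"
    and L_pos: "L > 0"
    and h_smooth: "\<forall>y\<in>edom \<phi>p. \<forall>y'\<in>interior (edom \<phi>p).
         real_of_ereal (h y) - real_of_ereal (h y') - gh y' \<bullet> (y - y') \<le> L * bdist \<phi>p Gp y y'"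
    and sol_exists: "\<exists>xs zs. xs \<in> edom \<phi>p \<and> zs \<in> edom \<phi>d \<and>
         xs \<in> edom h \<and> - (transpose A *v zs) - gh xs \<in> subdiff f xs \<and> A *v xs \<in> subdiff (conjugate g) zs"
    and closed_dp: "\<forall>y\<in>edom \<phi>p. \<forall>c. closed {y'\<in>interior (edom \<phi>p). bdist \<phi>p Gp y y' \<le> c}"
    and closed_dd: "\<forall>w\<in>edom \<phi>d. \<forall>c. closed {w'\<in>interior (edom \<phi>d). bdist \<phi>d Gd w w' \<le> c}"
    and cont_dp: "\<forall>xs y. (\<forall>k. xs k \<in> interior (edom \<phi>p)) \<and> xs \<longlonglongrightarrow> y \<and> y \<in> edom \<phi>p
         \<longrightarrow> (\<lambda>k. bdist \<phi>p Gp y (xs k)) \<longlonglongrightarrow> 0"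
    and cont_dd: "\<forall>zs w. (\<forall>k. zs k \<in> interior (edom \<phi>d)) \<and> zs \<longlonglongrightarrow> w \<and> w \<in> edom \<phi>d
         \<longrightarrow> (\<lambda>k. bdist \<phi>d Gd w (zs k)) \<longlonglongrightarrow> 0"
    and step: "\<sigma> > 0" "\<tau> > 0" "\<sigma> * \<tau> * (opnorm Np Nd A)\<^sup>2 + \<tau> * L < 1"
    and x0: "x 0 \<in> interior (edom \<phi>p) \<inter> edom h"
    and z0: "z 0 \<in> interior (edom \<phi>d)"
    and iter: "(\<forall>k. x (Suc k) = bprox \<phi>p Gp (\<lambda>y. ereal \<tau> * f y) (x k)
                          (\<tau> *\<^sub>R (transpose A *v z k) + \<tau> *\<^sub>R gh (x k))
                 \<and> z (Suc k) = bprox \<phi>d Gd (\<lambda>w. ereal \<sigma> * conjugate g w) (z k)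
                          (- \<sigma> *\<^sub>R (A *v (2 *\<^sub>R x (Suc k) - x k))))
            \<or> (\<forall>k. z (Suc k) = bprox \<phi>d Gd (\<lambda>w. ereal \<sigma> * conjugate g w) (z k)
                          (- \<sigma> *\<^sub>R (A *v x k))
                 \<and> x (Suc k) = bprox \<phi>p Gp (\<lambda>y. ereal \<tau> * f y) (x k)
                          (\<tau> *\<^sub>R (transpose A *v (2 *\<^sub>R z (Suc k) - z k)) + \<tau> *\<^sub>R gh (x k)))"
  shows "\<exists>xh zh. x \<longlonglongrightarrow> xh \<and> z \<longlonglongrightarrow> zh \<and> xh \<in> edom h
            \<and> - (transpose A *v zh) - gh xh \<in> subdiff f xh \<and> A *v xh \<in> subdiff (conjugate g) zh"
proof -
  from iter have "bregman_condat_vu f h gh g A \<phi>p Gp \<phi>d Gd Np Nd L \<sigma> \<tau> 1 x z z (\<lambda>k. 2 *\<^sub>R x (Suc k) - x k)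
    \<or> bregman_condat_vu f h gh g A \<phi>p Gp \<phi>d Gd Np Nd L \<sigma> \<tau> (-1) x z (\<lambda>k. 2 *\<^sub>R z (Suc k) - z k) x"
    using assms unfolding bregman_condat_vu_def by auto
  then show ?thesis by (elim disjE) (erule bregman_condat_vu.iterates_converge)+
qed

end
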